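(* Let $c>0$. There is a positive constant $C_1$ such that for all $f\in C_B[0,\infty)$, all $0<\beta<1$, all $n\in\mathbb{N}$ with $n>3c$ and all $x\ge0$, $$|\mathcal{D}_{n,c}^{*\beta}(f,x)-f(x)|\le C_1\,\omega_2\Big(f,\sqrt{\mu_{2,n,c}^{*\beta}(x)}\Big),$$ where $\mu_{2,n,c}^{*\beta}(x)=\mathcal{D}_{n,c}^{*\beta}((t-x)^2,x)=\frac{c}{n-3c}x^2+\frac{2-2\beta+\beta^2}{(n-3c)(1-\beta)^2}x$.
   Context: For $\beta\in[0,1)$, $y\ge 0$, $n\in\mathbb{N}$ and integers $v\ge0$ let $\omega_\beta(v,ny)=ny(ny+v\beta)^{v-1}\frac{e^{-(ny+v\beta)}}{v!}$. For $c>0$, integers $v\ge1$ and $t\ge0$ let $p_{n,v-1,c}(t)=c\,\frac{\Gamma(n/c+v-1)}{\Gamma(v)\Gamma(n/c)}\cdot\frac{(ct)^{v-1}}{(1+ct)^{n/c+v-1}}$. For $n>2c$ put $r_n(x)=\frac{(n-2c)(1-\beta)x}{n}$ and define $$\mathcal{D}_{n,c}^{*\beta}(f,x)=\frac{n-c}{c}\sum_{v=1}^{\infty}\omega_\beta(v,n r_n(x))\int_0^\infty p_{n,v-1,c}(t)f(t)\,dt+e^{-n r_n(x)}f(0),\quad x\ge0.$$ $C_B[0,\infty)$ is the space of bounded continuous functions on $[0,\infty)$, and $\omega_2(f,\delta)=\sup_{0<h\le\delta}\sup_{x\ge0}|f(x+2h)-2f(x+h)+f(x)|$. *)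

theory Defs
  imports "HOL-Analysis.Analysis"
begin

definition omega_beta :: "real \<Rightarrow> nat \<Rightarrow> real \<Rightarrow> real" where
  "omega_beta \<beta> v u = u * (u + real v * \<beta>) ^ (v - 1) * exp (- (u + real v * \<beta>)) / fact v"

text \<open>p_{n,k,c}(t) with k = v - 1\<close>
definition p_basis :: "nat \<Rightarrow> nat \<Rightarrow> real \<Rightarrow> real \<Rightarrow> real" where
  "p_basis n k c t = c * Gamma (real n / c + real k) / (Gamma (real k + 1) * Gamma (real n / c))
      * (c * t) ^ k / (1 + c * t) powr (real n / c + real k)"

definition r_n :: "nat \<Rightarrow> real \<Rightarrow> real \<Rightarrow> real \<Rightarrow> real" where
  "r_n n c \<beta> x = (real n - 2 * c) * (1 - \<beta>) * x / real n"

definition D_op :: "nat \<Rightarrow> real \<Rightarrow> real \<Rightarrow> (real \<Rightarrow> real) \<Rightarrow> real \<Rightarrow> real" where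
  "D_op n c \<beta> f x =
     (real n - c) / c *
       (\<Sum>v. omega_beta \<beta> (Suc v) (real n * r_n n c \<beta> x) *
              (LINT t:{0..}|lborel. p_basis n v c t * f t))
     + exp (- (real n * r_n n c \<beta> x)) * f 0"

text \<open>Second order modulus of smoothness; the empty supremum (delta <= 0) is taken as 0.\<close>
definition omega2 :: "(real \<Rightarrow> real) \<Rightarrow> real \<Rightarrow> real" where
  "omega2 f \<delta> = Sup (insert 0 {\<bar>f (x + 2 * h) - 2 * f (x + h) + f x\<bar> | h x. 0 < h \<and> h \<le> \<delta> \<and> 0 \<le> x})"

definition mu2 :: "nat \<Rightarrow> real \<Rightarrow> real \<Rightarrow> real \<Rightarrow> real" where
  "mu2 n c \<beta> x = c / (real n - 3 * c) * x ^ 2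
      + (2 - 2 * \<beta> + \<beta> ^ 2) / ((real n - 3 * c) * (1 - \<beta>) ^ 2) * x"

end

theory Submission
  imports Defs
begin

text \<open>The operator is a positive linear functional at each \<open>x\<close>: a weighted sum of the means
  \<open>kernel_mean n c k\<close> of the beta-prime kernels \<open>p_basis n k c\<close>, plus a point mass at \<open>0\<close>.
  It reproduces constants and linear functions, and its second central moment is \<open>\<mu> = mu2 n c \<beta> x\<close>.
  These moments come from the Abel-type identity
  \<open>\<Sum>\<^sub>m (y + m\<beta>)\<^sup>m e\<^sup>-\<^sup>(\<^sup>y\<^sup>+\<^sup>m\<^sup>\<beta>\<^sup>) / m! = 1 / (1 - \<beta>)\<close> for \<open>y \<ge> 0\<close>: the left-hand side \<open>S\<close> solves the delay
  equation \<open>S' y = S (y + \<beta>) - S y\<close>, so \<open>S y - \<integral>\<^sub>y\<^sup>y\<^sup>+\<^sup>\<beta> S\<close> is constant, and a growth argument forces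
  \<open>S\<close> itself to be constant.

  With \<open>\<delta> = \<surd>\<mu>\<close> and \<open>W = \<omega>\<^sub>2(f, \<delta>)\<close>, a second-order Steklov mean \<open>g\<close> of \<open>f\<close> satisfies
  \<open>|f - g| \<le> W\<close> and \<open>|g''| \<le> 9 W / \<delta>\<^sup>2\<close>, whence
  \<open>|f t - f x - g' x (t - x)| \<le> 2 W + (9/2) W (t - x)\<^sup>2 / \<delta>\<^sup>2\<close>. Applying the operator gives
  \<open>|D f x - f x| \<le> 2 W + (9/2) W \<le> 7 W\<close>.\<close>

section \<open>Generalised Poisson weights\<close>

definition poisson_term :: "nat \<Rightarrow> real \<Rightarrow> real" where
  "poisson_term m w = w ^ m * exp (- w) / fact m"

definition poisson_term_deriv :: "nat \<Rightarrow> real \<Rightarrow> real" where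
  "poisson_term_deriv m w = (if m = 0 then 0 else poisson_term (m - 1) w) - poisson_term m w"

lemma poisson_term_nonneg: "0 \<le> w \<Longrightarrow> 0 \<le> poisson_term m w"
  by (simp add: poisson_term_def)

lemma poisson_term_Suc: "real (Suc m) * poisson_term (Suc m) w = w * poisson_term m w"
  unfolding poisson_term_def by (simp add: fact_Suc field_simps del: of_nat_Suc)

lemma poisson_term_has_derivative:
  "(poisson_term m has_field_derivative poisson_term_deriv m w) (at w within S)"
proof -
  have "(poisson_term m has_field_derivative
          (real m * w ^ (m - 1) * exp (- w) - w ^ m * exp (- w)) / fact m) (at w within S)"
    unfolding poisson_term_def[abs_def] by (rule derivative_eq_intros refl | simp)+
  moreover have "(real m * w ^ (m - 1) * exp (- w) - w ^ m * exp (- w)) / fact m = poisson_term_deriv m w"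
    by (cases m) (simp_all add: poisson_term_deriv_def poisson_term_def fact_Suc diff_divide_distrib
        del: of_nat_Suc)
  ultimately show ?thesis by simp
qed

lemma power_div_fact_le_exp:
  fixes z :: real
  assumes "0 \<le> z"
  shows "z ^ m / fact m \<le> exp z"
proof -
  have sums: "(\<lambda>n. z ^ n / fact n) sums exp z"
    using exp_converges[of z] by (simp add: divide_inverse mult.commute)
  have "(\<Sum>n\<in>{m}. z ^ n / fact n) \<le> (\<Sum>n. z ^ n / fact n)"
    using assms by (intro sum_le_suminf sums_summable[OF sums]) auto
  with sums show ?thesis by (simp add: sums_iff)
qed

text \<open>Iterating the window bound \<open>k\<close> times gives \<open>|g t| \<le> C exp (\<epsilon> t) (\<beta> exp (\<epsilon> \<beta>))\<^sup>k\<close>.\<close>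
lemma window_contraction_imp_zero:
  fixes g :: "real \<Rightarrow> real"
  assumes contraction:
      "\<And>t B. 0 \<le> t \<Longrightarrow> (\<And>u. t \<le> u \<Longrightarrow> u \<le> t + \<beta> \<Longrightarrow> \<bar>g u\<bar> \<le> B) \<Longrightarrow> \<bar>g t\<bar> \<le> \<beta> * B"
    and growth: "\<And>t. 0 \<le> t \<Longrightarrow> \<bar>g t\<bar> \<le> C * exp (\<epsilon> * t)"
    and "0 \<le> \<beta>" "0 \<le> \<epsilon>" "\<beta> * exp (\<epsilon> * \<beta>) < 1" "0 \<le> y"
  shows "g y = 0"
proof -
  define r where "r = \<beta> * exp (\<epsilon> * \<beta>)"
  have r: "0 \<le> r" "r < 1" using assms(3,5) by (simp_all add: r_def)
  have C: "0 \<le> C" using growth[of 0] by simp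
  have iterate: "\<bar>g t\<bar> \<le> C * exp (\<epsilon> * t) * r ^ k" if "0 \<le> t" for t k
    using that
  proof (induction k arbitrary: t)
    case 0
    then show ?case using growth by simp
  next
    case (Suc k)
    have "\<bar>g u\<bar> \<le> C * exp (\<epsilon> * (t + \<beta>)) * r ^ k" if "t \<le> u" "u \<le> t + \<beta>" for u
    proof -
      have "\<bar>g u\<bar> \<le> C * exp (\<epsilon> * u) * r ^ k" using Suc that by simp
      also have "\<dots> \<le> C * exp (\<epsilon> * (t + \<beta>)) * r ^ k"
        using C r that assms(4) by (intro mult_right_mono mult_left_mono) (auto intro: mult_left_mono)
      finally show ?thesis .
    qed
    then have "\<bar>g t\<bar> \<le> \<beta> * (C * exp (\<epsilon> * (t + \<beta>)) * r ^ k)"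
      by (rule contraction[OF Suc.prems])
    also have "\<dots> = C * exp (\<epsilon> * t) * r ^ Suc k"
      by (simp add: r_def distrib_left exp_add)
    finally show ?case .
  qed
  have "(\<lambda>k. C * exp (\<epsilon> * y) * r ^ k) \<longlonglongrightarrow> C * exp (\<epsilon> * y) * 0"
    using r by (intro tendsto_mult tendsto_const LIMSEQ_power_zero) auto
  then have "\<bar>g y\<bar> \<le> C * exp (\<epsilon> * y) * 0"
    by (rule LIMSEQ_le_const) (use iterate assms(6) in blast)
  then show ?thesis by simp
qed

text \<open>The closed form in \<open>abel_sums_first\<close> satisfies the recursion \<open>abel_sum_first_rec\<close>.\<close>
lemma first_moment_rec:
  fixes t b :: real
  assumes "b < 1"
  shows "t / (1 - b)\<^sup>2 + b / (1 - b) ^ 3 = (t + b) / (1 - b) + b * ((t + b) / (1 - b)\<^sup>2 + b / (1 - b) ^ 3)"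
proof -
  define d where "d = 1 - b"
  have "d \<noteq> 0" "b = 1 - d" using assms by (auto simp: d_def)
  then show ?thesis unfolding d_def[symmetric]
    by (simp add: field_simps power2_eq_square power3_eq_cube) algebra
qed

locale gen_poisson =
  fixes \<beta> :: real
  assumes beta_pos: "0 < \<beta>" and beta_less_1: "\<beta> < 1"
begin

text \<open>\<open>\<epsilon>\<close> and \<open>q\<close> are chosen so that \<open>\<beta> exp (\<epsilon> \<beta>) < 1\<close> and \<open>exp (\<epsilon> \<beta>) < 1 + \<epsilon>\<close>; the latter makes
  the Poisson terms decay geometrically in \<open>m\<close> (\<open>poisson_term_le\<close>).\<close>
definition "\<epsilon> = (1 - \<beta>) / 2"
definition "q = exp (\<epsilon> * \<beta>) / (1 + \<epsilon>)"

lemma eps_pos: "0 < \<epsilon>"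
  using beta_less_1 by (simp add: \<epsilon>_def)

lemma exp_eps_beta_le: "exp (\<epsilon> * \<beta>) \<le> 1 / (1 - \<epsilon> * \<beta>)" and eps_beta_less: "\<epsilon> * \<beta> < 1 - \<beta>"
proof -
  have "\<epsilon> * \<beta> = (1 - \<beta>) * (\<beta> / 2)" by (simp add: \<epsilon>_def)
  also have "\<dots> < (1 - \<beta>) * 1" using beta_pos beta_less_1 by (intro mult_strict_left_mono) auto
  finally show less: "\<epsilon> * \<beta> < 1 - \<beta>" by simp
  have "exp (\<epsilon> * \<beta>) * (1 - \<epsilon> * \<beta>) \<le> exp (\<epsilon> * \<beta>) * exp (- (\<epsilon> * \<beta>))"
    using exp_ge_add_one_self[of "- (\<epsilon> * \<beta>)"] by (intro mult_left_mono) auto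
  then show "exp (\<epsilon> * \<beta>) \<le> 1 / (1 - \<epsilon> * \<beta>)"
    using less beta_pos by (simp add: exp_minus field_simps)
qed

lemma q_pos: "0 < q"
  using eps_pos by (simp add: q_def)

lemma q_less_1: "q < 1"
proof -
  have pos: "0 < 1 - \<epsilon> * \<beta>" using eps_beta_less beta_pos by linarith
  have "0 < \<epsilon> * (1 - \<beta> - \<epsilon> * \<beta>)" using eps_beta_less eps_pos by (intro mult_pos_pos) auto
  then have "1 < (1 + \<epsilon>) * (1 - \<epsilon> * \<beta>)" by (simp add: algebra_simps)
  then have "1 / (1 - \<epsilon> * \<beta>) < 1 + \<epsilon>" using pos by (simp add: field_simps)
  with exp_eps_beta_le have "exp (\<epsilon> * \<beta>) < 1 + \<epsilon>" by linarith
  then show ?thesis using eps_pos by (simp add: q_def field_simps)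
qed

lemma beta_exp_less_1: "\<beta> * exp (\<epsilon> * \<beta>) < 1"
proof -
  have pos: "0 < 1 - \<epsilon> * \<beta>" using eps_beta_less beta_pos by linarith
  have "\<beta> * exp (\<epsilon> * \<beta>) \<le> \<beta> * (1 / (1 - \<epsilon> * \<beta>))"
    using exp_eps_beta_le beta_pos by (intro mult_left_mono) auto
  also have "\<dots> < 1" using pos eps_beta_less by (simp add: field_simps)
  finally show ?thesis .
qed

lemma poisson_term_le:
  assumes "0 \<le> y"
  shows "poisson_term m (y + real m * \<beta>) \<le> exp (\<epsilon> * y) * q ^ m"
proof -
  define w where "w = y + real m * \<beta>"
  have "0 \<le> w" using assms beta_pos by (simp add: w_def)
  then have "(w * (1 + \<epsilon>)) ^ m / fact m \<le> exp (w * (1 + \<epsilon>))"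
    using eps_pos by (intro power_div_fact_le_exp) auto
  then have "w ^ m \<le> exp (w * (1 + \<epsilon>)) * fact m / (1 + \<epsilon>) ^ m"
    using eps_pos by (simp add: power_mult_distrib divide_le_eq le_divide_eq)
  then have "w ^ m * exp (- w) / fact m \<le> exp (w * (1 + \<epsilon>)) * fact m / (1 + \<epsilon>) ^ m * exp (- w) / fact m"
    by (intro divide_right_mono mult_right_mono) auto
  also have "\<dots> = exp (w * (1 + \<epsilon>) + - w) / (1 + \<epsilon>) ^ m"
    by (simp add: mult_exp_exp)
  also have "w * (1 + \<epsilon>) + - w = \<epsilon> * y + real m * (\<epsilon> * \<beta>)"
    by (simp add: w_def algebra_simps)
  also have "exp (\<epsilon> * y + real m * (\<epsilon> * \<beta>)) / (1 + \<epsilon>) ^ m = exp (\<epsilon> * y) * q ^ m"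
    by (simp add: q_def exp_add exp_of_nat_mult power_divide)
  finally show ?thesis by (simp add: poisson_term_def w_def)
qed

lemma summable_geometric_q: "summable (\<lambda>m. C * q ^ m)"
  using q_pos q_less_1 by (intro summable_mult summable_geometric) auto

lemma summable_geometric_q_Suc: "summable (\<lambda>m. C * (real (Suc m) * q ^ m))"
proof -
  have "summable (\<lambda>n. diffs (\<lambda>_. 1::real) n * q ^ n)"
    by (rule termdiff_converges[where K=1]) (use q_pos q_less_1 in \<open>auto simp: summable_geometric\<close>)
  then show ?thesis by (intro summable_mult) (simp add: diffs_def)
qed

definition "abel_sum y = (\<Sum>m. poisson_term m (y + real m * \<beta>))"

lemma summable_abel:
  assumes "0 \<le> y"
  shows "summable (\<lambda>m. poisson_term m (y + real m * \<beta>))"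
  by (rule summable_comparison_test'[OF summable_geometric_q[of "exp (\<epsilon> * y)"]])
     (use assms beta_pos poisson_term_le poisson_term_nonneg in auto)

lemma summable_abel_first:
  assumes "0 \<le> y"
  shows "summable (\<lambda>m. real m * poisson_term m (y + real m * \<beta>))"
proof (rule summable_comparison_test'[OF summable_geometric_q_Suc[of "exp (\<epsilon> * y)"]])
  fix m
  have "0 \<le> poisson_term m (y + real m * \<beta>)" using assms beta_pos by (intro poisson_term_nonneg) auto
  moreover have "real m * poisson_term m (y + real m * \<beta>) \<le> real (Suc m) * (exp (\<epsilon> * y) * q ^ m)"
    using poisson_term_le[OF assms, of m] calculation by (intro mult_mono) auto
  ultimately show "norm (real m * poisson_term m (y + real m * \<beta>)) \<le> exp (\<epsilon> * y) * (real (Suc m) * q ^ m)"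
    by (simp add: mult_ac)
qed

lemma abel_sum_nonneg: "0 \<le> y \<Longrightarrow> 0 \<le> abel_sum y"
  unfolding abel_sum_def using beta_pos by (intro suminf_nonneg summable_abel poisson_term_nonneg) auto

lemma abel_sum_le:
  assumes "0 \<le> y"
  shows "abel_sum y \<le> exp (\<epsilon> * y) / (1 - q)"
proof -
  have "abel_sum y \<le> (\<Sum>m. exp (\<epsilon> * y) * q ^ m)"
    unfolding abel_sum_def using poisson_term_le[OF assms]
    by (intro suminf_le summable_abel assms summable_geometric_q) auto
  also have "\<dots> = exp (\<epsilon> * y) / (1 - q)"
    using q_pos q_less_1 by (simp add: suminf_mult summable_geometric suminf_geometric)
  finally show ?thesis .
qed

lemma poisson_term_deriv_le:
  assumes "0 \<le> y" "y \<le> Y"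
  shows "\<bar>poisson_term_deriv m (y + real m * \<beta>)\<bar> \<le> 2 * exp (\<epsilon> * (Y + 1)) / q * q ^ m"
proof -
  define E where "E = exp (\<epsilon> * (Y + 1)) / q * q ^ m"
  define A where "A = (if m = 0 then 0 else poisson_term (m - 1) (y + real m * \<beta>))"
  define B where "B = poisson_term m (y + real m * \<beta>)"
  have "0 \<le> A" "0 \<le> B"
    using assms beta_pos by (auto simp: A_def B_def intro!: poisson_term_nonneg)
  moreover have "A \<le> E"
  proof (cases m)
    case (Suc k)
    have "poisson_term k ((y + \<beta>) + real k * \<beta>) \<le> exp (\<epsilon> * (y + \<beta>)) * q ^ k"
      using assms beta_pos by (intro poisson_term_le) auto
    also have "\<dots> \<le> exp (\<epsilon> * (Y + 1)) * q ^ k"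
      using assms eps_pos beta_less_1 q_pos by (intro mult_right_mono) auto
    finally show ?thesis using q_pos Suc by (simp add: A_def E_def algebra_simps)
  qed (use q_pos in \<open>simp add: A_def E_def\<close>)
  moreover have "B \<le> E"
  proof -
    have "B \<le> exp (\<epsilon> * y) * q ^ m"
      unfolding B_def by (rule poisson_term_le[OF assms(1)])
    also have "\<dots> \<le> exp (\<epsilon> * (Y + 1)) * q ^ m"
      using assms eps_pos q_pos by (intro mult_right_mono) auto
    also have "\<dots> \<le> E" using q_pos q_less_1 by (simp add: E_def field_simps)
    finally show ?thesis .
  qed
  ultimately have "\<bar>A - B\<bar> \<le> 2 * E" by linarith
  then show ?thesis by (simp add: poisson_term_deriv_def A_def B_def E_def)
qed

lemma abel_sum_deriv_sums:
  assumes "0 \<le> y"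
  shows "(\<lambda>m. poisson_term_deriv m (y + real m * \<beta>)) sums (abel_sum (y + \<beta>) - abel_sum y)"
proof -
  define e where "e m = (if m = 0 then 0 else poisson_term (m - 1) (y + real m * \<beta>))" for m
  have "(\<lambda>k. poisson_term k ((y + \<beta>) + real k * \<beta>)) sums abel_sum (y + \<beta>)"
    unfolding abel_sum_def using assms beta_pos by (intro summable_sums summable_abel) auto
  then have "(\<lambda>k. e (Suc k)) sums abel_sum (y + \<beta>)" by (simp add: e_def algebra_simps)
  then have "e sums abel_sum (y + \<beta>)" by (subst (asm) sums_Suc_iff) (simp add: e_def)
  moreover have "(\<lambda>m. poisson_term m (y + real m * \<beta>)) sums abel_sum y"
    unfolding abel_sum_def using assms by (intro summable_sums summable_abel)
  ultimately show ?thesis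
    unfolding poisson_term_deriv_def e_def[symmetric] by (rule sums_diff)
qed

lemma abel_sum_has_derivative:
  assumes "0 \<le> y" "y \<le> Y"
  shows "(abel_sum has_field_derivative (abel_sum (y + \<beta>) - abel_sum y)) (at y within {0..Y})"
proof -
  have term_deriv: "((\<lambda>y. poisson_term m (y + real m * \<beta>)) has_field_derivative
      poisson_term_deriv m (y + real m * \<beta>)) (at y within {0..Y})" for m y
  proof -
    have "((\<lambda>y. y + real m * \<beta>) has_field_derivative 1) (at y within {0..Y})"
      by (auto intro!: derivative_eq_intros)
    from DERIV_chain2[OF poisson_term_has_derivative this] show ?thesis by simp
  qed
  have "uniform_limit {0..Y} (\<lambda>n y. \<Sum>m<n. poisson_term_deriv m (y + real m * \<beta>))
      (\<lambda>y. \<Sum>m. poisson_term_deriv m (y + real m * \<beta>)) sequentially"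
    by (rule Weierstrass_m_test[OF _ summable_geometric_q[of "2 * exp (\<epsilon> * (Y + 1)) / q"]])
       (use poisson_term_deriv_le in auto)
  from has_field_derivative_series[OF convex_real_interval(5) term_deriv this, of 0]
  obtain g where g: "\<forall>y\<in>{0..Y}. (\<lambda>m. poisson_term m (y + real m * \<beta>)) sums g y \<and>
      (g has_field_derivative (\<Sum>m. poisson_term_deriv m (y + real m * \<beta>))) (at y within {0..Y})"
    using assms summable_abel[of 0] by auto
  have g_eq: "g y = abel_sum y" if "y \<in> {0..Y}" for y
    using g that unfolding abel_sum_def by (metis sums_unique)
  have "(g has_field_derivative (\<Sum>m. poisson_term_deriv m (y + real m * \<beta>))) (at y within {0..Y})"
    using g assms by auto
  then have "(abel_sum has_field_derivative (\<Sum>m. poisson_term_deriv m (y + real m * \<beta>)))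
      (at y within {0..Y})"
    by (rule has_field_derivative_transform_within[where d=1]) (use assms g_eq in auto)
  then show ?thesis using abel_sum_deriv_sums[OF assms(1)] sums_unique by metis
qed

lemma abel_sum_continuous_on: "continuous_on {0..Y} abel_sum"
  unfolding continuous_on_eq_continuous_within
  using abel_sum_has_derivative DERIV_continuous by fastforce

definition "abel_primitive z = integral {0..z} abel_sum"

lemma abel_primitive_has_derivative_within:
  assumes "0 \<le> z" "z \<le> Y"
  shows "(abel_primitive has_real_derivative abel_sum z) (at z within {0..Y})"
  unfolding abel_primitive_def using assms
  by (intro integral_has_real_derivative abel_sum_continuous_on) auto

lemma abel_primitive_has_derivative:
  assumes "0 < z"
  shows "(abel_primitive has_real_derivative abel_sum z) (at z)"
proof -
  have "at z within {0..z + 1} = at z" using assms by (intro at_within_Icc_at) auto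
  then show ?thesis using abel_primitive_has_derivative_within[of z "z + 1"] assms by simp
qed

lemma abel_sum_window_integral:
  assumes "0 \<le> y"
  shows "(abel_sum has_integral (abel_primitive (y + \<beta>) - abel_primitive y)) {y..y + \<beta>}"
proof (rule fundamental_theorem_of_calculus)
  show "y \<le> y + \<beta>" using beta_pos by simp
  fix t assume t: "t \<in> {y..y + \<beta>}"
  have "(abel_primitive has_real_derivative abel_sum t) (at t within {0..y + \<beta>})"
    using t assms by (intro abel_primitive_has_derivative_within) auto
  then have "(abel_primitive has_real_derivative abel_sum t) (at t within {y..y + \<beta>})"
    by (rule DERIV_subset) (use assms in auto)
  then show "(abel_primitive has_vector_derivative abel_sum t) (at t within {y..y + \<beta>})"
    by (simp add: has_real_derivative_iff_has_vector_derivative)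
qed

text \<open>The delay equation says exactly that \<open>S y - \<integral>\<^sub>y\<^sup>y\<^sup>+\<^sup>\<beta> S\<close> has derivative zero.\<close>
lemma abel_sum_minus_window_const:
  assumes "0 \<le> y"
  shows "abel_sum y - (abel_primitive (y + \<beta>) - abel_primitive y) = abel_sum 0 - abel_primitive \<beta>"
proof -
  define \<Phi> where "\<Phi> t = abel_sum t - (abel_primitive (t + \<beta>) - abel_primitive t)" for t
  have "(\<Phi> has_real_derivative 0) (at t within {0..y})" if "t \<in> {0..y}" for t
  proof -
    have "((\<lambda>t. abel_primitive (t + \<beta>)) has_real_derivative abel_sum (t + \<beta>) * 1) (at t within {0..y})"
      using that beta_pos
      by (intro DERIV_chain'[where g=abel_primitive] abel_primitive_has_derivative)
         (auto intro!: derivative_eq_intros)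
    then have "(\<Phi> has_real_derivative
        (abel_sum (t + \<beta>) - abel_sum t) - (abel_sum (t + \<beta>) * 1 - abel_sum t)) (at t within {0..y})"
      unfolding \<Phi>_def[abs_def] using that
      by (intro DERIV_diff abel_sum_has_derivative abel_primitive_has_derivative_within) auto
    then show ?thesis by simp
  qed
  then obtain C where "\<forall>t\<in>{0..y}. \<Phi> t = C"
    using has_field_derivative_zero_constant[of "{0..y}" \<Phi>] by auto
  then have "\<Phi> y = \<Phi> 0" using assms by auto
  then show ?thesis by (simp add: \<Phi>_def abel_primitive_def)
qed

lemma abel_sum_const:
  assumes "0 \<le> y"
  shows "abel_sum y = abel_sum 0"
proof -
  define \<Phi>\<^sub>0 where "\<Phi>\<^sub>0 = abel_sum 0 - abel_primitive \<beta>"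
  define h where "h = \<Phi>\<^sub>0 / (1 - \<beta>)"
  define g where "g t = abel_sum t - h" for t
  have window: "(g has_integral g t) {t..t + \<beta>}" if "0 \<le> t" for t
  proof -
    have "((\<lambda>s. h) has_integral \<beta> * h) {t..t + \<beta>}"
      using has_integral_const_real[of h t "t + \<beta>"] beta_pos by simp
    with abel_sum_window_integral[OF that]
    have "(g has_integral (abel_primitive (t + \<beta>) - abel_primitive t) - \<beta> * h) {t..t + \<beta>}"
      unfolding g_def[abs_def] by (rule has_integral_diff)
    moreover have "abel_primitive (t + \<beta>) - abel_primitive t = abel_sum t - \<Phi>\<^sub>0"
      using abel_sum_minus_window_const[OF that] unfolding \<Phi>\<^sub>0_def by linarith
    moreover have "(abel_sum t - \<Phi>\<^sub>0) - \<beta> * h = g t"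
      using beta_less_1 by (simp add: g_def h_def field_simps)
    ultimately show ?thesis by simp
  qed
  have "g t = 0" if "0 \<le> t" for t
  proof (rule window_contraction_imp_zero[of \<beta> g "1 / (1 - q) + \<bar>h\<bar>" \<epsilon>])
    fix t B
    assume t: "0 \<le> t" and B: "\<And>u. t \<le> u \<Longrightarrow> u \<le> t + \<beta> \<Longrightarrow> \<bar>g u\<bar> \<le> B"
    have "0 \<le> B" using B[of t] beta_pos by linarith
    then have "norm (g t) \<le> B * measure lborel (cbox t (t + \<beta>))"
      by (rule has_integral_bound[where f=g]) (use window[OF t] B in auto)
    then show "\<bar>g t\<bar> \<le> \<beta> * B" using beta_pos by (simp add: mult.commute)
  next
    fix t :: real assume t: "0 \<le> t"
    have e: "1 \<le> exp (\<epsilon> * t)" using t eps_pos by simp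
    have "\<bar>g t\<bar> \<le> abel_sum t + \<bar>h\<bar>" using abel_sum_nonneg[OF t] by (simp add: g_def)
    also have "\<dots> \<le> exp (\<epsilon> * t) / (1 - q) + \<bar>h\<bar> * exp (\<epsilon> * t)"
      using abel_sum_le[OF t] mult_left_mono[OF e, of "\<bar>h\<bar>"] by (intro add_mono) auto
    finally show "\<bar>g t\<bar> \<le> (1 / (1 - q) + \<bar>h\<bar>) * exp (\<epsilon> * t)" by (simp add: field_simps)
  qed (use that beta_pos eps_pos beta_exp_less_1 in auto)
  from this[OF assms] this[of 0] show ?thesis by (simp add: g_def)
qed

lemma abel_sum_0: "abel_sum 0 = 1 + \<beta> * abel_sum \<beta>"
proof -
  have "\<beta> * poisson_term k (\<beta> + real k * \<beta>) = poisson_term (Suc k) (0 + real (Suc k) * \<beta>)" for k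
  proof -
    have w: "\<beta> + real k * \<beta> = real (Suc k) * \<beta>" by (simp add: algebra_simps)
    show ?thesis
      using poisson_term_Suc[of k "real (Suc k) * \<beta>"] unfolding w by (simp del: of_nat_Suc)
  qed
  moreover have "(\<lambda>k. \<beta> * poisson_term k (\<beta> + real k * \<beta>)) sums (\<beta> * abel_sum \<beta>)"
    unfolding abel_sum_def using beta_pos by (intro sums_mult summable_sums summable_abel) auto
  ultimately have "(\<lambda>k. poisson_term (Suc k) (0 + real (Suc k) * \<beta>)) sums (\<beta> * abel_sum \<beta>)" by simp
  then have "(\<lambda>m. poisson_term m (0 + real m * \<beta>)) sums (\<beta> * abel_sum \<beta> + 1)"
    by (subst (asm) sums_Suc_iff) (simp add: poisson_term_def)
  then show ?thesis unfolding abel_sum_def by (simp add: sums_iff)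
qed

theorem abel_sums:
  assumes "0 \<le> y"
  shows "(\<lambda>m. poisson_term m (y + real m * \<beta>)) sums (1 / (1 - \<beta>))"
proof -
  have "abel_sum 0 = 1 + \<beta> * abel_sum 0"
    using abel_sum_0 abel_sum_const[of \<beta>] beta_pos by simp
  then have "abel_sum y = 1 / (1 - \<beta>)"
    using abel_sum_const[OF assms] beta_less_1 by (simp add: field_simps)
  then show ?thesis using summable_abel[OF assms] unfolding abel_sum_def by (metis summable_sums)
qed

definition "abel_sum_first y = (\<Sum>m. real m * poisson_term m (y + real m * \<beta>))"

lemma abel_sum_first_le:
  assumes "0 \<le> y"
  shows "\<bar>abel_sum_first y\<bar> \<le> exp (\<epsilon> * y) * (\<Sum>m. real (Suc m) * q ^ m)"
proof -
  have term_le: "real m * poisson_term m (y + real m * \<beta>) \<le> exp (\<epsilon> * y) * (real (Suc m) * q ^ m)" for m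
  proof -
    have "0 \<le> poisson_term m (y + real m * \<beta>)" using assms beta_pos by (intro poisson_term_nonneg) auto
    then show ?thesis
      using poisson_term_le[OF assms, of m] q_pos by (simp add: mult_ac) (intro mult_mono, auto)
  qed
  have "0 \<le> abel_sum_first y"
    unfolding abel_sum_first_def using assms beta_pos
    by (intro suminf_nonneg summable_abel_first mult_nonneg_nonneg poisson_term_nonneg) auto
  moreover have "abel_sum_first y \<le> (\<Sum>m. exp (\<epsilon> * y) * (real (Suc m) * q ^ m))"
    unfolding abel_sum_first_def using term_le
    by (intro suminf_le summable_abel_first assms summable_geometric_q_Suc) auto
  moreover have "(\<Sum>m. exp (\<epsilon> * y) * (real (Suc m) * q ^ m)) = exp (\<epsilon> * y) * (\<Sum>m. real (Suc m) * q ^ m)"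
    using summable_geometric_q_Suc[of 1] by (intro suminf_mult) simp
  ultimately show ?thesis by simp
qed

lemma abel_sum_first_rec:
  assumes "0 \<le> y"
  shows "abel_sum_first y = (y + \<beta>) / (1 - \<beta>) + \<beta> * abel_sum_first (y + \<beta>)"
proof -
  have y\<beta>: "0 \<le> y + \<beta>" using assms beta_pos by simp
  have "real (Suc k) * poisson_term (Suc k) (y + real (Suc k) * \<beta>) =
      (y + \<beta>) * poisson_term k ((y + \<beta>) + real k * \<beta>)
      + \<beta> * (real k * poisson_term k ((y + \<beta>) + real k * \<beta>))" for k
  proof -
    have w: "(y + \<beta>) + real k * \<beta> = y + real (Suc k) * \<beta>" by (simp add: algebra_simps)
    show ?thesis unfolding w poisson_term_Suc by (simp add: algebra_simps)
  qed
  moreover have "(\<lambda>k. (y + \<beta>) * poisson_term k ((y + \<beta>) + real k * \<beta>)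
      + \<beta> * (real k * poisson_term k ((y + \<beta>) + real k * \<beta>)))
      sums ((y + \<beta>) * (1 / (1 - \<beta>)) + \<beta> * abel_sum_first (y + \<beta>))"
    unfolding abel_sum_first_def
    by (intro sums_add sums_mult abel_sums y\<beta> summable_sums summable_abel_first)
  ultimately have "(\<lambda>k. real (Suc k) * poisson_term (Suc k) (y + real (Suc k) * \<beta>))
      sums ((y + \<beta>) / (1 - \<beta>) + \<beta> * abel_sum_first (y + \<beta>))"
    by simp
  then have "(\<lambda>m. real m * poisson_term m (y + real m * \<beta>))
      sums ((y + \<beta>) / (1 - \<beta>) + \<beta> * abel_sum_first (y + \<beta>) + 0)"
    by (subst (asm) sums_Suc_iff) simp
  then show ?thesis unfolding abel_sum_first_def by (simp add: sums_iff)
qed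

theorem abel_sums_first:
  assumes "0 \<le> y"
  shows "(\<lambda>m. real m * poisson_term m (y + real m * \<beta>)) sums (y / (1 - \<beta>)\<^sup>2 + \<beta> / (1 - \<beta>) ^ 3)"
proof -
  define g where "g t = abel_sum_first t - (t / (1 - \<beta>)\<^sup>2 + \<beta> / (1 - \<beta>) ^ 3)" for t
  define M where "M = (\<Sum>m. real (Suc m) * q ^ m) + 1 / (\<epsilon> * (1 - \<beta>)\<^sup>2) + \<beta> / (1 - \<beta>) ^ 3"
  have "g t = 0" if "0 \<le> t" for t
  proof (rule window_contraction_imp_zero[of \<beta> g M \<epsilon>])
    fix t B
    assume t: "0 \<le> t" and B: "\<And>u. t \<le> u \<Longrightarrow> u \<le> t + \<beta> \<Longrightarrow> \<bar>g u\<bar> \<le> B"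
    have "g t = \<beta> * g (t + \<beta>)"
      using abel_sum_first_rec[OF t] first_moment_rec[OF beta_less_1, of t]
      by (simp add: g_def algebra_simps)
    then show "\<bar>g t\<bar> \<le> \<beta> * B"
      using B[of "t + \<beta>"] beta_pos by (simp add: abs_mult)
  next
    fix t :: real assume t: "0 \<le> t"
    have e: "1 \<le> exp (\<epsilon> * t)" using t eps_pos by simp
    have "\<epsilon> * t \<le> exp (\<epsilon> * t)" using exp_ge_add_one_self[of "\<epsilon> * t"] by linarith
    then have "t / (1 - \<beta>)\<^sup>2 \<le> exp (\<epsilon> * t) / (\<epsilon> * (1 - \<beta>)\<^sup>2)"
      using eps_pos beta_less_1 by (simp add: field_simps)
    moreover have "\<beta> / (1 - \<beta>) ^ 3 * 1 \<le> \<beta> / (1 - \<beta>) ^ 3 * exp (\<epsilon> * t)"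
      using e beta_pos beta_less_1 by (intro mult_left_mono) auto
    moreover have "0 \<le> t / (1 - \<beta>)\<^sup>2 + \<beta> / (1 - \<beta>) ^ 3"
      using t beta_pos beta_less_1 by simp
    moreover have "M * exp (\<epsilon> * t) = exp (\<epsilon> * t) * (\<Sum>m. real (Suc m) * q ^ m)
        + exp (\<epsilon> * t) / (\<epsilon> * (1 - \<beta>)\<^sup>2) + \<beta> / (1 - \<beta>) ^ 3 * exp (\<epsilon> * t)"
      by (simp add: M_def distrib_right)
    ultimately show "\<bar>g t\<bar> \<le> M * exp (\<epsilon> * t)"
      using abel_sum_first_le[OF t] unfolding g_def abs_le_iff by linarith
  qed (use that beta_pos eps_pos beta_exp_less_1 in auto)
  then have "abel_sum_first y = y / (1 - \<beta>)\<^sup>2 + \<beta> / (1 - \<beta>) ^ 3"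
    using assms by (simp add: g_def)
  then show ?thesis
    using summable_sums[OF summable_abel_first[OF assms]] unfolding abel_sum_first_def by simp
qed

lemma omega_beta_Suc_eq:
  "real (Suc v) * omega_beta \<beta> (Suc v) u = u * poisson_term v ((u + \<beta>) + real v * \<beta>)"
proof -
  have w: "(u + \<beta>) + real v * \<beta> = u + real (Suc v) * \<beta>" by (simp add: algebra_simps)
  show ?thesis unfolding w omega_beta_def poisson_term_def
    by (simp add: fact_Suc field_simps del: of_nat_Suc)
qed

lemma omega_beta_Suc_eq_diff:
  "omega_beta \<beta> (Suc v) u = poisson_term (Suc v) (u + real (Suc v) * \<beta>) - \<beta> * poisson_term v ((u + \<beta>) + real v * \<beta>)"
proof -
  define w where "w = u + real (Suc v) * \<beta>"
  have w: "(u + \<beta>) + real v * \<beta> = w" by (simp add: w_def algebra_simps)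
  have "real (Suc v) * (poisson_term (Suc v) w - \<beta> * poisson_term v w) = (w - real (Suc v) * \<beta>) * poisson_term v w"
    using poisson_term_Suc[of v w] by (simp add: algebra_simps)
  also have "\<dots> = real (Suc v) * omega_beta \<beta> (Suc v) u"
    using omega_beta_Suc_eq[of v u] unfolding w by (simp add: w_def)
  finally show ?thesis unfolding w by (simp add: w_def del: of_nat_Suc)
qed

lemma omega_beta_sums:
  assumes "0 \<le> u"
  shows "(\<lambda>v. omega_beta \<beta> (Suc v) u) sums (1 - exp (- u))"
proof -
  have "(\<lambda>v. poisson_term (Suc v) (u + real (Suc v) * \<beta>)) sums (1 / (1 - \<beta>) - exp (- u))"
    using sums_Suc_iff[of "\<lambda>m. poisson_term m (u + real m * \<beta>)" "1 / (1 - \<beta>) - exp (- u)"]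
      abel_sums[OF assms] by (simp add: poisson_term_def)
  moreover have "(\<lambda>v. poisson_term v ((u + \<beta>) + real v * \<beta>)) sums (1 / (1 - \<beta>))"
    using assms beta_pos by (intro abel_sums) auto
  ultimately have "(\<lambda>v. omega_beta \<beta> (Suc v) u) sums (1 / (1 - \<beta>) - exp (- u) - \<beta> * (1 / (1 - \<beta>)))"
    unfolding omega_beta_Suc_eq_diff by (intro sums_diff sums_mult)
  moreover have "1 / (1 - \<beta>) - \<beta> * (1 / (1 - \<beta>)) = 1"
    using beta_less_1 by (simp add: divide_simps)
  ultimately show ?thesis by (simp add: algebra_simps)
qed

lemma omega_beta_sums_first:
  assumes "0 \<le> u"
  shows "(\<lambda>v. real (Suc v) * omega_beta \<beta> (Suc v) u) sums (u / (1 - \<beta>))"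
  unfolding omega_beta_Suc_eq using sums_mult[OF abel_sums[of "u + \<beta>"], of u] assms beta_pos
  by simp

lemma omega_beta_sums_second:
  assumes "0 \<le> u"
  shows "(\<lambda>v. (real (Suc v))\<^sup>2 * omega_beta \<beta> (Suc v) u)
    sums (u / (1 - \<beta>) + u * ((u + \<beta>) / (1 - \<beta>)\<^sup>2 + \<beta> / (1 - \<beta>) ^ 3))"
proof -
  have u\<beta>: "0 \<le> u + \<beta>" using assms beta_pos by simp
  have "(real (Suc v))\<^sup>2 * omega_beta \<beta> (Suc v) u
     = u * poisson_term v ((u + \<beta>) + real v * \<beta>) + u * (real v * poisson_term v ((u + \<beta>) + real v * \<beta>))" for v
  proof -
    have "(real (Suc v))\<^sup>2 * omega_beta \<beta> (Suc v) u = real (Suc v) * (real (Suc v) * omega_beta \<beta> (Suc v) u)"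
      by (simp add: power2_eq_square)
    then show ?thesis unfolding omega_beta_Suc_eq by (simp add: algebra_simps)
  qed
  moreover have "(\<lambda>v. u * poisson_term v ((u + \<beta>) + real v * \<beta>)
      + u * (real v * poisson_term v ((u + \<beta>) + real v * \<beta>)))
    sums (u * (1 / (1 - \<beta>)) + u * ((u + \<beta>) / (1 - \<beta>)\<^sup>2 + \<beta> / (1 - \<beta>) ^ 3))"
    by (intro sums_add sums_mult abel_sums abel_sums_first u\<beta>)
  ultimately show ?thesis by simp
qed

end

section \<open>Beta-prime integrals and the moments of the kernel\<close>

lemma filterlim_div_one_minus_at_left_1: "LIM x at_left (1::real). x / (1 - x) :> at_top"
proof -
  have "((\<lambda>x::real. 1 - x) \<longlongrightarrow> 0) (at_left 1)" by (intro tendsto_eq_intros) auto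
  moreover have "eventually (\<lambda>x::real. 1 - x \<in> {0<..}) (at_left 1)"
    by (auto simp: eventually_at_left_field intro: exI[of _ 0])
  ultimately have "LIM x at_left (1::real). 1 - x :> at_right 0"
    unfolding filterlim_at by (auto elim: eventually_mono)
  then have "LIM x at_left (1::real). inverse (1 - x) :> at_top"
    by (rule filterlim_compose[OF filterlim_inverse_at_top_right])
  moreover have "((\<lambda>x::real. x) \<longlongrightarrow> 1) (at_left 1)" by (intro tendsto_eq_intros) auto
  ultimately have "LIM x at_left (1::real). x * inverse (1 - x) :> at_top"
    by (intro filterlim_tendsto_pos_mult_at_top) auto
  then show ?thesis by (simp add: divide_inverse)
qed

lemma Beta_open_unit_interval:
  fixes a b :: real
  assumes "0 < a" "0 < b"
  shows "set_integrable lborel {0<..<1} (\<lambda>x. x powr (a - 1) * (1 - x) powr (b - 1))"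
    and "(LINT x:{0<..<1}|lborel. x powr (a - 1) * (1 - x) powr (b - 1)) = Beta a b"
proof -
  define \<B> where "\<B> x = x powr (a - 1) * (1 - x) powr (b - 1)" for x :: real
  have closed: "set_integrable lborel {0..1} \<B>"
    unfolding \<B>_def using integrable_Beta assms by simp
  have "set_integrable lborel {0<..<1} \<B>"
    by (rule set_integrable_subset[OF closed]) auto
  then show "set_integrable lborel {0<..<1} (\<lambda>x. x powr (a - 1) * (1 - x) powr (b - 1))"
    unfolding \<B>_def .
  then have "(LINT x:{0<..<1}|lborel. \<B> x) = (LINT x:{0..1}|lborel. \<B> x)"
    using closed unfolding \<B>_def[abs_def] set_integrable_def
    by (intro set_integral_cong_set)
       (auto intro!: AE_I[where N="{0,1}"] borel_measurable_integrable
         simp: emeasure_insert_ne set_borel_measurable_def)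
  also have "\<dots> = integral {0..1} \<B>"
    by (rule set_borel_integral_eq_integral[OF closed])
  also have "\<dots> = Beta a b"
    using has_integral_Beta_real[OF assms] unfolding \<B>_def by (simp add: integral_unique)
  finally show "(LINT x:{0<..<1}|lborel. x powr (a - 1) * (1 - x) powr (b - 1)) = Beta a b"
    by (simp add: \<B>_def)
qed

lemma beta_prime_substitution_eq:
  fixes b x :: real
  assumes "0 < x" "x < 1"
  shows "(x / (1 - x)) ^ j / (1 + x / (1 - x)) powr (real j + 1 + b) * (1 / (1 - x)\<^sup>2)
       = x powr (real j + 1 - 1) * (1 - x) powr (b - 1)"
proof -
  have d: "0 < 1 - x" using assms by simp
  have "1 + x / (1 - x) = 1 / (1 - x)" using d by (simp add: field_simps)
  then have "(x / (1 - x)) ^ j / (1 + x / (1 - x)) powr (real j + 1 + b) * (1 / (1 - x)\<^sup>2)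
      = x ^ j * ((1 - x) powr (real j + 1 + b) / ((1 - x) ^ j * (1 - x)\<^sup>2))"
    using d by (simp add: power_divide powr_divide)
  also have "(1 - x) ^ j * (1 - x)\<^sup>2 = (1 - x) powr (real j + 2)"
    using d by (simp add: powr_add powr_realpow power_add[symmetric])
  also have "(1 - x) powr (real j + 1 + b) / (1 - x) powr (real j + 2) = (1 - x) powr (b - 1)"
    using d by (simp add: powr_diff[symmetric])
  also have "x ^ j = x powr (real j + 1 - 1)" using assms by (simp add: powr_realpow)
  finally show ?thesis .
qed

lemma beta_prime_integral:
  fixes b :: real
  assumes b: "0 < b"
  shows "set_integrable lborel (einterval 0 \<infinity>) (\<lambda>u. u ^ j / (1 + u) powr (real j + 1 + b))"
    and "(LBINT u=0..\<infinity>. u ^ j / (1 + u) powr (real j + 1 + b)) = Beta (real j + 1) b"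
proof -
  define f where "f u = u ^ j / (1 + u) powr (real j + 1 + b)" for u :: real
  define g where "g x = x / (1 - x)" for x :: real
  define g' where "g' x = 1 / (1 - x)\<^sup>2" for x :: real
  define \<B> where "\<B> x = x powr (real j + 1 - 1) * (1 - x) powr (b - 1)" for x :: real
  have unit_interval: "einterval (ereal 0) (ereal 1) = {0<..<(1::real)}" by (auto simp: einterval_def)
  note Beta = Beta_open_unit_interval[of "real j + 1" b, folded \<B>_def]
  have fg_eq: "f (g x) * g' x = \<B> x" if "x \<in> {0<..<1}" for x
    unfolding f_def g_def g'_def \<B>_def by (rule beta_prime_substitution_eq) (use that in auto)
  have fg: "set_integrable lborel (einterval (ereal 0) (ereal 1)) (\<lambda>x. f (g x) * g' x)"
  proof -
    have "set_integrable lborel {0<..<1} (\<lambda>x. f (g x) * g' x) = set_integrable lborel {0<..<1} \<B>"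
      by (rule set_integrable_cong) (use fg_eq in auto)
    with Beta(1) b show ?thesis unfolding unit_interval by simp
  qed
  have g_deriv: "DERIV g x :> g' x" if "ereal 0 < ereal x" "ereal x < ereal 1" for x
    using that unfolding g_def g'_def
    by (auto intro!: derivative_eq_intros simp: field_simps power2_eq_square)
  have f_cont: "isCont f (g x)" if "ereal 0 < ereal x" "ereal x < ereal 1" for x
  proof -
    have "0 < g x" using that by (simp add: g_def)
    then show ?thesis unfolding f_def by (intro continuous_intros) auto
  qed
  have g'_cont: "isCont g' x" if "ereal 0 < ereal x" "ereal x < ereal 1" for x
    using that unfolding g'_def by (intro continuous_intros) auto
  have f_nonneg: "0 \<le> f (g x)" if "ereal 0 < ereal x" "ereal x < ereal 1" for x
    using that unfolding f_def g_def by auto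
  have g'_nonneg: "0 \<le> g' x" for x unfolding g'_def by simp
  have g_at_0: "((ereal \<circ> g \<circ> real_of_ereal) \<longlongrightarrow> ereal 0) (at_right (ereal 0))"
  proof -
    have "(g \<longlongrightarrow> 0) (at_right 0)" unfolding g_def by (intro tendsto_eq_intros) auto
    then show ?thesis unfolding o_assoc[symmetric] by (simp add: ereal_tendsto_simps)
  qed
  have g_at_1: "((ereal \<circ> g \<circ> real_of_ereal) \<longlongrightarrow> \<infinity>) (at_left (ereal 1))"
  proof -
    have "LIM x at_left 1. g x :> at_top"
      unfolding g_def by (rule filterlim_div_one_minus_at_left_1)
    then show ?thesis unfolding o_assoc[symmetric]
      by (simp add: ereal_tendsto_simps at_left_ereal filterlim_filtermap)
         (use ereal_tendsto_simps2(2)[of g "at_left 1"] in \<open>simp add: comp_def\<close>)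
  qed
  note subst = interval_integral_substitution_nonneg[of "ereal 0" "ereal 1" g g' f "ereal 0" \<infinity>,
      OF _ g_deriv f_cont g'_cont f_nonneg g'_nonneg g_at_0 g_at_1 fg]
  show "set_integrable lborel (einterval 0 \<infinity>) (\<lambda>u. u ^ j / (1 + u) powr (real j + 1 + b))"
    using subst(1) unfolding f_def[abs_def] by (simp add: zero_ereal_def g'_def)
  have "(LBINT x=ereal 0..ereal 1. f (g x) * g' x) = (LINT x:{0<..<1}|lborel. \<B> x)"
    unfolding interval_lebesgue_integral_def unit_interval
    by (simp only: if_True ereal_less_eq(3) zero_le_one) (intro set_lebesgue_integral_cong, use fg_eq in auto)
  also have "\<dots> = Beta (real j + 1) b"
    using Beta(2) b by simp
  finally show "(LBINT u=0..\<infinity>. u ^ j / (1 + u) powr (real j + 1 + b)) = Beta (real j + 1) b"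
    using subst(2) unfolding f_def[abs_def] by (simp add: zero_ereal_def)
qed

lemma Gamma_plus1_real: "0 < (z::real) \<Longrightarrow> Gamma (z + 1) = z * Gamma z"
  by (rule Gamma_plus1) (auto dest: nonpos_Ints_nonpos)

lemma beta_prime_has_bochner_integral:
  fixes b :: real
  assumes "0 < b"
  shows "has_bochner_integral lborel
      (\<lambda>u. indicator {0<..} u *\<^sub>R (u ^ j / (1 + u) powr (real j + 1 + b))) (Beta (real j + 1) b)"
proof -
  have half_line: "einterval 0 \<infinity> = ({0<..} :: real set)" by (auto simp: einterval_def zero_ereal_def)
  show ?thesis
    using beta_prime_integral[OF assms, of j]
    unfolding half_line interval_lebesgue_integral_0_infty set_integrable_def set_lebesgue_integral_def
    by (simp add: has_bochner_integral_iff)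
qed

lemma p_basis_nonneg: "0 < c \<Longrightarrow> 0 < real n \<Longrightarrow> 0 \<le> t \<Longrightarrow> 0 \<le> p_basis n k c t"
  unfolding p_basis_def
  by (intro divide_nonneg_nonneg mult_nonneg_nonneg) (auto intro!: Gamma_real_nonneg add_pos_nonneg)

lemma p_basis_measurable [measurable]: "p_basis n k c \<in> borel_measurable lborel"
  unfolding p_basis_def[abs_def] by measurable

text \<open>Substituting \<open>u = c t\<close> turns the \<open>i\<close>-th moment of \<open>p_basis\<close> into a beta-prime integral.\<close>
lemma p_basis_moment:
  assumes c: "0 < c" and n: "(real i + 1) * c < real n"
  shows "has_bochner_integral lborel (\<lambda>t. indicator {0..} t *\<^sub>R (p_basis n k c t * t ^ i))
    (Gamma (real k + real i + 1) * Gamma (real n / c - 1 - real i)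
      / (Gamma (real k + 1) * Gamma (real n / c)) / c ^ i)"
proof -
  define a where "a = real n / c"
  have a: "real i + 1 < a" using n c by (simp add: a_def field_simps)
  define b where "b = a - 1 - real i"
  have b: "0 < b" using a by (simp add: b_def)
  define j where "j = k + i"
  define F where "F u = u ^ j / (1 + u) powr (real j + 1 + b)" for u :: real
  define G where "G = c * Gamma (a + real k) / (Gamma (real k + 1) * Gamma a)"
  have exponent: "real j + 1 + b = a + real k" by (simp add: j_def b_def)
  have "has_bochner_integral lborel (\<lambda>t. indicator {0<..} (0 + c * t) *\<^sub>R F (0 + c * t))
      (Beta (real j + 1) b /\<^sub>R \<bar>c\<bar>)"
    using beta_prime_has_bochner_integral[OF b, of j] c
      lborel_has_bochner_integral_real_affine_iff[of c "\<lambda>u. indicator {0<..} u *\<^sub>R F u" _ 0]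
    by (simp add: F_def)
  then have scaled: "has_bochner_integral lborel
      (\<lambda>t. (G / c ^ i) * (indicator {0<..} (0 + c * t) *\<^sub>R F (0 + c * t)))
      ((G / c ^ i) * (Beta (real j + 1) b /\<^sub>R \<bar>c\<bar>))"
    by (rule has_bochner_integral_mult_right)
  have pointwise: "indicator {0..} t *\<^sub>R (p_basis n k c t * t ^ i)
      = (G / c ^ i) * (indicator {0<..} (0 + c * t) *\<^sub>R F (0 + c * t))" if "t \<noteq> 0" for t
  proof (cases "t > 0")
    case True
    have "p_basis n k c t * t ^ i = G * (c * t) ^ k / (1 + c * t) powr (a + real k) * t ^ i"
      unfolding p_basis_def G_def a_def by simp
    also have "\<dots> = (G / c ^ i) * ((c * t) ^ j / (1 + c * t) powr (a + real k))"
      using c by (simp add: j_def power_add power_mult_distrib field_simps)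
    finally show ?thesis using True c by (simp add: F_def exponent indicator_def)
  next
    case False
    with that c have "t < 0" "\<not> 0 < c * t" by (auto simp: mult_pos_neg not_less less_imp_le)
    then show ?thesis by (simp add: indicator_def)
  qed
  have "has_bochner_integral lborel (\<lambda>t. indicator {0..} t *\<^sub>R (p_basis n k c t * t ^ i))
      ((G / c ^ i) * (Beta (real j + 1) b /\<^sub>R \<bar>c\<bar>))"
  proof (rule has_bochner_integral_cong_AE[THEN iffD1, OF _ _ _ scaled])
    show "AE t in lborel. (G / c ^ i) * (indicator {0<..} (0 + c * t) *\<^sub>R F (0 + c * t))
        = indicator {0..} t *\<^sub>R (p_basis n k c t * t ^ i)"
      using AE_lborel_singleton[of 0] by eventually_elim (use pointwise in auto)
  qed (unfold F_def, measurable)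
  moreover have "(G / c ^ i) * (Beta (real j + 1) b /\<^sub>R \<bar>c\<bar>) =
      Gamma (real k + real i + 1) * Gamma (a - 1 - real i) / (Gamma (real k + 1) * Gamma a) / c ^ i"
  proof -
    have "Gamma (a + real k) \<noteq> 0" using a by (intro Gamma_real_pos[THEN less_imp_neq, symmetric]) simp
    moreover have "Beta (real j + 1) b = Gamma (real k + real i + 1) * Gamma (a - 1 - real i) / Gamma (a + real k)"
      unfolding Beta_def exponent[symmetric] by (simp add: j_def b_def)
    ultimately show ?thesis using c by (simp add: G_def field_simps)
  qed
  ultimately show ?thesis unfolding a_def by simp
qed

lemma p_basis_moment_integral:
  assumes "0 < c" "(real i + 1) * c < real n"
  shows "set_integrable lborel {0..} (\<lambda>t. p_basis n k c t * t ^ i)"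
    and "(LINT t:{0..}|lborel. p_basis n k c t * t ^ i) =
      Gamma (real k + real i + 1) * Gamma (real n / c - 1 - real i)
        / (Gamma (real k + 1) * Gamma (real n / c)) / c ^ i"
  using integrable.intros[OF p_basis_moment[OF assms, of k]]
    has_bochner_integral_integral_eq[OF p_basis_moment[OF assms, of k]]
  unfolding set_integrable_def set_lebesgue_integral_def by auto

lemma p_basis_mass:
  assumes c: "0 < c" and n: "c < real n"
  shows "(LINT t:{0..}|lborel. p_basis n k c t) = c / (real n - c)"
proof -
  define d where "d = real n / c - 1"
  have d: "0 < d" using n c by (simp add: d_def field_simps)
  have "Gamma (real k + 1) = fact k" "0 < Gamma d" using d Gamma_fact[of k] by (auto simp: add.commute)
  moreover have "Gamma (real n / c) = d * Gamma d"
    using Gamma_plus1_real[OF d] by (simp add: d_def)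
  moreover have "real n - c = d * c" using c by (simp add: d_def field_simps)
  ultimately show ?thesis
    using p_basis_moment_integral(2)[of c 0 n k] c n by (simp add: d_def[symmetric])
qed

lemma p_basis_moment_Suc:
  assumes c: "0 < c" and n: "(real i + 2) * c < real n"
  shows "(LINT t:{0..}|lborel. p_basis n k c t * t ^ Suc i)
    = (real k + real i + 1) / (real n - (real i + 2) * c) * (LINT t:{0..}|lborel. p_basis n k c t * t ^ i)"
proof -
  define a where "a = real n / c"
  define d where "d = a - 2 - real i"
  have d: "0 < d" using n c by (simp add: d_def a_def field_simps)
  have "(real i + 1) * c < real n" using n c by (simp add: algebra_simps)
  note moment = p_basis_moment_integral(2)[OF c this, of k]
  have "(real (Suc i) + 1) * c < real n" using n by (simp add: add.commute)
  note moment_Suc = p_basis_moment_integral(2)[OF c this, of k]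
  have Gk: "Gamma (real k + real (Suc i) + 1) = (real k + real i + 1) * Gamma (real k + real i + 1)"
    using Gamma_plus1_real[of "real k + real i + 1"] by (simp add: add_ac)
  have Ga: "Gamma (a - 1 - real i) = d * Gamma (a - 1 - real (Suc i))"
    using Gamma_plus1_real[of d] d by (simp add: d_def algebra_simps)
  have nc: "real n - (real i + 2) * c = d * c" using c by (simp add: d_def a_def field_simps)
  have "0 < Gamma a" "Gamma (real k + 1) = fact k" using d Gamma_fact[of k] by (auto simp: d_def add.commute)
  then show ?thesis
    unfolding moment moment_Suc a_def[symmetric] Gk Ga nc using c d by (simp add: field_simps)
qed

text \<open>The factor \<open>(n - c) / c\<close> is the reciprocal of the mass of \<open>p_basis n k c\<close> (\<open>p_basis_mass\<close>).\<close>
definition kernel_mean :: "nat \<Rightarrow> real \<Rightarrow> nat \<Rightarrow> (real \<Rightarrow> real) \<Rightarrow> real" where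
  "kernel_mean n c k \<phi> = (real n - c) / c * (LINT t:{0..}|lborel. p_basis n k c t * \<phi> t)"

abbreviation kernel_integrable :: "nat \<Rightarrow> real \<Rightarrow> nat \<Rightarrow> (real \<Rightarrow> real) \<Rightarrow> bool" where
  "kernel_integrable n c k \<phi> \<equiv> set_integrable lborel {0..} (\<lambda>t. p_basis n k c t * \<phi> t)"

lemma kernel_integrable_add:
  "kernel_integrable n c k \<phi> \<Longrightarrow> kernel_integrable n c k \<psi> \<Longrightarrow> kernel_integrable n c k (\<lambda>t. \<phi> t + \<psi> t)"
  using set_integral_add(1) by (simp add: distrib_left)

lemma kernel_integrable_diff:
  "kernel_integrable n c k \<phi> \<Longrightarrow> kernel_integrable n c k \<psi> \<Longrightarrow> kernel_integrable n c k (\<lambda>t. \<phi> t - \<psi> t)"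
  using set_integral_diff(1) by (simp add: right_diff_distrib)

lemma kernel_integrable_cmult: "kernel_integrable n c k \<phi> \<Longrightarrow> kernel_integrable n c k (\<lambda>t. r * \<phi> t)"
  using set_integrable_mult_right[of r lborel "{0..}" "\<lambda>t. p_basis n k c t * \<phi> t"]
  by (simp add: mult.left_commute)

lemma kernel_integrable_power:
  assumes "0 < c" "(real i + 1) * c < real n"
  shows "kernel_integrable n c k (\<lambda>t. t ^ i)"
  by (rule p_basis_moment_integral(1)[OF assms])

lemma kernel_integrable_const:
  assumes "0 < c" "c < real n"
  shows "kernel_integrable n c k (\<lambda>t. r)"
  using kernel_integrable_cmult[OF kernel_integrable_power[of c 0 n k], of r] assms by simp

lemma kernel_integrable_bounded:
  assumes c: "0 < c" "c < real n" and cont: "continuous_on {0..} \<phi>"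
    and bound: "\<And>t. 0 \<le> t \<Longrightarrow> \<bar>\<phi> t\<bar> \<le> C"
  shows "kernel_integrable n c k \<phi>"
proof (rule set_integrable_bound)
  show "set_integrable lborel {0..} (\<lambda>t. p_basis n k c t * C)"
    by (rule kernel_integrable_const[OF c])
  have "(\<lambda>t. p_basis n k c t * (indicator {0..} t *\<^sub>R \<phi> t)) \<in> borel_measurable lborel"
    using borel_measurable_continuous_on_indicator[OF _ cont] by measurable
  then show "set_borel_measurable lborel {0..} (\<lambda>t. p_basis n k c t * \<phi> t)"
    unfolding set_borel_measurable_def by (simp add: mult_ac indicator_def)
  show "AE t in lborel. t \<in> {0..} \<longrightarrow> norm (p_basis n k c t * \<phi> t) \<le> norm (p_basis n k c t * C)"
  proof (intro AE_I2 impI)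
    fix t :: real assume "t \<in> {0..}"
    moreover from this c have "0 \<le> p_basis n k c t" by (intro p_basis_nonneg) auto
    ultimately show "norm (p_basis n k c t * \<phi> t) \<le> norm (p_basis n k c t * C)"
      using bound by (auto simp: abs_mult intro!: mult_left_mono order.trans[OF _ abs_ge_self])
  qed
qed

lemma kernel_mean_add:
  assumes "kernel_integrable n c k \<phi>" "kernel_integrable n c k \<psi>"
  shows "kernel_mean n c k (\<lambda>t. \<phi> t + \<psi> t) = kernel_mean n c k \<phi> + kernel_mean n c k \<psi>"
  using set_integral_add(2)[OF assms] unfolding kernel_mean_def by (simp add: distrib_left)

lemma kernel_mean_diff:
  assumes "kernel_integrable n c k \<phi>" "kernel_integrable n c k \<psi>"
  shows "kernel_mean n c k (\<lambda>t. \<phi> t - \<psi> t) = kernel_mean n c k \<phi> - kernel_mean n c k \<psi>"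
  using set_integral_diff(2)[OF assms] unfolding kernel_mean_def by (simp add: right_diff_distrib)

lemma kernel_mean_cmult: "kernel_mean n c k (\<lambda>t. r * \<phi> t) = r * kernel_mean n c k \<phi>"
  unfolding kernel_mean_def by (simp add: mult.left_commute)

lemma kernel_mean_mono:
  assumes c: "0 < c" "c < real n"
    and "kernel_integrable n c k \<phi>" "kernel_integrable n c k \<psi>"
    and le: "\<And>t. 0 \<le> t \<Longrightarrow> \<phi> t \<le> \<psi> t"
  shows "kernel_mean n c k \<phi> \<le> kernel_mean n c k \<psi>"
proof -
  have "(LINT t:{0..}|lborel. p_basis n k c t * \<phi> t) \<le> (LINT t:{0..}|lborel. p_basis n k c t * \<psi> t)"
    using assms(3,4)
    by (rule set_integral_mono) (use le p_basis_nonneg c in \<open>auto intro: mult_left_mono\<close>)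
  then show ?thesis unfolding kernel_mean_def using c by (intro mult_left_mono) auto
qed

lemma kernel_mean_abs_le:
  assumes c: "0 < c" "c < real n"
    and "kernel_integrable n c k \<phi>" "kernel_integrable n c k \<psi>"
    and le: "\<And>t. 0 \<le> t \<Longrightarrow> \<bar>\<phi> t\<bar> \<le> \<psi> t"
  shows "\<bar>kernel_mean n c k \<phi>\<bar> \<le> kernel_mean n c k \<psi>"
proof -
  have "kernel_mean n c k \<phi> \<le> kernel_mean n c k \<psi>"
    using le by (intro kernel_mean_mono[OF assms(1-4)]) (auto simp: abs_le_iff)
  moreover have "kernel_mean n c k (\<lambda>t. - 1 * \<phi> t) \<le> kernel_mean n c k \<psi>"
    using le by (intro kernel_mean_mono[OF c kernel_integrable_cmult[OF assms(3)] assms(4)])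
      (auto simp: abs_le_iff)
  ultimately show ?thesis unfolding kernel_mean_cmult by simp
qed

lemma kernel_mean_const:
  assumes "0 < c" "c < real n"
  shows "kernel_mean n c k (\<lambda>t. r) = r"
  using p_basis_mass[OF assms, of k] assms by (simp add: kernel_mean_def)

lemma kernel_mean_id:
  assumes "0 < c" "2 * c < real n"
  shows "kernel_mean n c k (\<lambda>t. t) = (real k + 1) / (real n - 2 * c)"
  using p_basis_moment_Suc[of c 0 n k] p_basis_mass[of c n k] assms by (simp add: kernel_mean_def)

lemma kernel_mean_sq:
  assumes "0 < c" "3 * c < real n"
  shows "kernel_mean n c k (\<lambda>t. t\<^sup>2) = (real k + 1) * (real k + 2) / ((real n - 2 * c) * (real n - 3 * c))"
proof -
  have "(LINT t:{0..}|lborel. p_basis n k c t * t ^ Suc 1)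
      = (real k + 2) / (real n - 3 * c) * (LINT t:{0..}|lborel. p_basis n k c t * t)"
    using p_basis_moment_Suc[of c 1 n k] assms by (simp add: add_ac)
  then have "kernel_mean n c k (\<lambda>t. t\<^sup>2) = (real k + 2) / (real n - 3 * c) * kernel_mean n c k (\<lambda>t. t)"
    by (simp add: kernel_mean_def numeral_2_eq_2 mult_ac)
  then show ?thesis using kernel_mean_id[of c n k] assms by (simp add: mult_ac)
qed

section \<open>Second differences and Steklov means\<close>

definition second_diff :: "real \<Rightarrow> (real \<Rightarrow> real) \<Rightarrow> real \<Rightarrow> real" where
  "second_diff h F x = F (x + 2 * h) - 2 * F (x + h) + F x"

lemma second_diff_has_derivative:
  assumes "DERIV F x :> F' x" "DERIV F (x + h) :> F' (x + h)" "DERIV F (x + 2 * h) :> F' (x + 2 * h)"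
  shows "DERIV (second_diff h F) x :> second_diff h F' x"
proof -
  have "DERIV (\<lambda>x. F (x + h)) x :> F' (x + h)" "DERIV (\<lambda>x. F (x + 2 * h)) x :> F' (x + 2 * h)"
    using assms(2,3) by (simp_all add: DERIV_shift)
  then show ?thesis unfolding second_diff_def[abs_def]
    by (intro DERIV_add DERIV_diff DERIV_cmult assms(1))
qed

lemma second_order_taylor_bound:
  fixes g g' g'' :: "real \<Rightarrow> real"
  assumes "\<And>y. min x t \<le> y \<Longrightarrow> y \<le> max x t \<Longrightarrow> DERIV g y :> g' y"
    and "\<And>y. min x t \<le> y \<Longrightarrow> y \<le> max x t \<Longrightarrow> DERIV g' y :> g'' y"
    and "\<And>y. min x t \<le> y \<Longrightarrow> y \<le> max x t \<Longrightarrow> \<bar>g'' y\<bar> \<le> M"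
  shows "\<bar>g t - g x - g' x * (t - x)\<bar> \<le> M / 2 * (t - x)\<^sup>2"
proof (cases "t = x")
  case False
  define diff where "diff m = (if m = 0 then g else if m = 1 then g' else g'')" for m :: nat
  have "\<forall>m y. m < 2 \<and> min x t \<le> y \<and> y \<le> max x t \<longrightarrow> DERIV (diff m) y :> diff (Suc m) y"
    using assms(1,2) by (auto simp: diff_def less_2_cases_iff)
  then obtain \<xi> where \<xi>: "if t < x then t < \<xi> \<and> \<xi> < x else x < \<xi> \<and> \<xi> < t"
    and taylor: "g t = (\<Sum>m<2. diff m x / fact m * (t - x) ^ m) + diff 2 \<xi> / fact 2 * (t - x)\<^sup>2"
    using Taylor[of 2 diff g "min x t" "max x t" x t] False by (auto simp: diff_def)
  have \<xi>: "min x t \<le> \<xi>" "\<xi> \<le> max x t" using \<xi> by (auto split: if_splits)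
  from taylor have "\<bar>g t - g x - g' x * (t - x)\<bar> = \<bar>g'' \<xi>\<bar> / 2 * (t - x)\<^sup>2"
    by (simp add: diff_def numeral_2_eq_2 abs_mult)
  moreover have "\<bar>g'' \<xi>\<bar> / 2 * (t - x)\<^sup>2 \<le> M / 2 * (t - x)\<^sup>2"
    using assms(3)[OF \<xi>] by (intro mult_right_mono divide_right_mono) auto
  ultimately show ?thesis by simp
qed simp

lemma fundamental_theorem_of_calculus_affine:
  fixes \<phi> \<phi>' :: "real \<Rightarrow> real"
  assumes "0 \<le> a" "0 \<le> m" and deriv: "\<And>y. p \<le> y \<Longrightarrow> y \<le> p + m * a \<Longrightarrow> DERIV \<phi> y :> \<phi>' y"
  shows "((\<lambda>s. m * \<phi>' (p + m * s)) has_integral (\<phi> (p + m * a) - \<phi> p)) {0..a}"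
proof -
  have "((\<lambda>s. \<phi> (p + m * s)) has_vector_derivative m * \<phi>' (p + m * s)) (at s within {0..a})"
    if s: "s \<in> {0..a}" for s
  proof -
    have "p \<le> p + m * s" "p + m * s \<le> p + m * a" using s assms(2) by (auto intro: mult_left_mono)
    then have "((\<lambda>s. \<phi> (p + m * s)) has_real_derivative \<phi>' (p + m * s) * m) (at s within {0..a})"
      by (intro DERIV_chain'[where g=\<phi>] deriv) (auto intro!: derivative_eq_intros)
    then show ?thesis by (simp add: has_real_derivative_iff_has_vector_derivative mult.commute)
  qed
  from fundamental_theorem_of_calculus[OF assms(1) this] show ?thesis by simp
qed

locale bounded_second_diff =
  fixes f :: "real \<Rightarrow> real" and \<delta> W :: real
  assumes continuous: "continuous_on {0..} f" and delta_pos: "0 < \<delta>"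
    and second_diff_le: "\<And>h x. 0 < h \<Longrightarrow> h \<le> \<delta> \<Longrightarrow> 0 \<le> x \<Longrightarrow> \<bar>second_diff h f x\<bar> \<le> W"
begin

lemma W_nonneg: "0 \<le> W"
  using second_diff_le[of \<delta> 0] delta_pos by linarith

text \<open>Since \<open>F2'' = f_ext\<close>, \<open>second_diff h F2 x = \<integral>\<^sub>0\<^sup>h \<integral>\<^sub>0\<^sup>h f (x + r + s)\<close>, so \<open>steklov F2\<close> is the
  classical second-order Steklov mean of \<open>f\<close> with step \<open>a = \<delta> / 2\<close>. Extending \<open>f\<close> constantly to
  the left makes the antiderivatives differentiable at \<open>0\<close>.\<close>
definition "f_ext t = f (max 0 t)"
definition "a = \<delta> / 2"
definition "F1 x = integral {-2..x} f_ext"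
definition "F2 x = integral {-1..x} F1"
definition "steklov F x = (2 * second_diff a F x - second_diff (2 * a) F x / 4) / a\<^sup>2"

lemma a_pos: "0 < a"
  using delta_pos by (simp add: a_def)

lemma f_ext_eq: "0 \<le> t \<Longrightarrow> f_ext t = f t"
  by (simp add: f_ext_def)

lemma f_ext_continuous: "continuous_on UNIV f_ext"
proof -
  have "continuous_on UNIV (\<lambda>t::real. max 0 t)" by (intro continuous_intros)
  then show ?thesis
    unfolding f_ext_def[abs_def] using continuous_on_compose2[OF continuous] by fastforce
qed

lemma F1_has_derivative: "-2 < x \<Longrightarrow> DERIV F1 x :> f_ext x"
  unfolding F1_def using continuous_on_subset[OF f_ext_continuous]
  by (subst at_within_Icc_at[of "-2" x "x + 1", symmetric])
     (auto intro!: integral_has_real_derivative)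

lemma F2_has_derivative: "-1 < x \<Longrightarrow> DERIV F2 x :> F1 x"
proof -
  have "continuous_on {-1..x + 1} F1"
    by (rule continuous_at_imp_continuous_on) (auto intro!: DERIV_isCont F1_has_derivative)
  then show "-1 < x \<Longrightarrow> DERIV F2 x :> F1 x"
    unfolding F2_def
    by (subst at_within_Icc_at[of "-1" x "x + 1", symmetric]) (auto intro!: integral_has_real_derivative)
qed

lemma steklov_has_derivative:
  assumes "\<And>y. x \<le> y \<Longrightarrow> DERIV F y :> F' y"
  shows "DERIV (steklov F) x :> steklov F' x"
proof -
  have "DERIV (second_diff h F) x :> second_diff h F' x" if "0 \<le> h" for h
    using that by (intro second_diff_has_derivative assms) auto
  then show ?thesis
    unfolding steklov_def[abs_def] using a_pos by (intro DERIV_cdivide DERIV_diff DERIV_cmult) auto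
qed

lemma steklov_F2_has_derivative: "-1 < x \<Longrightarrow> DERIV (steklov F2) x :> steklov F1 x"
  by (intro steklov_has_derivative F2_has_derivative) auto

lemma steklov_F1_has_derivative: "-1 < x \<Longrightarrow> DERIV (steklov F1) x :> steklov f_ext x"
  by (intro steklov_has_derivative F1_has_derivative) auto

lemma steklov_f_ext_le:
  assumes "0 \<le> x"
  shows "\<bar>steklov f_ext x\<bar> \<le> 9 / 4 * W / a\<^sup>2"
proof -
  have "second_diff h f_ext x = second_diff h f x" if "0 \<le> h" for h
    using that assms by (simp add: second_diff_def f_ext_eq)
  then have "\<bar>second_diff a f_ext x\<bar> \<le> W" "\<bar>second_diff (2 * a) f_ext x\<bar> \<le> W"
    using second_diff_le[of a x] second_diff_le[of "2 * a" x] a_pos assms by (auto simp: a_def)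
  then have "\<bar>2 * second_diff a f_ext x - second_diff (2 * a) f_ext x / 4\<bar> \<le> 9 / 4 * W"
    unfolding abs_le_iff by (intro conjI) linarith+
  then have "\<bar>2 * second_diff a f_ext x - second_diff (2 * a) f_ext x / 4\<bar> / a\<^sup>2 \<le> 9 / 4 * W / a\<^sup>2"
    by (rule divide_right_mono) simp
  then show ?thesis unfolding steklov_def abs_divide by simp
qed

lemma steklov_taylor:
  assumes "0 \<le> x" "0 \<le> t"
  shows "\<bar>steklov F2 t - steklov F2 x - steklov F1 x * (t - x)\<bar> \<le> 9 / 2 * W / \<delta>\<^sup>2 * (t - x)\<^sup>2"
proof -
  have "\<bar>steklov F2 t - steklov F2 x - steklov F1 x * (t - x)\<bar> \<le> (9 / 4 * W / a\<^sup>2) / 2 * (t - x)\<^sup>2"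
    using assms by (intro second_order_taylor_bound[where g''="steklov f_ext"]
        steklov_F2_has_derivative steklov_F1_has_derivative steklov_f_ext_le) auto
  then show ?thesis by (simp add: a_def power_divide)
qed

text \<open>\<open>double_integral x a - double_integral x 0 = a\<^sup>2 (f x - steklov F2 x)\<close> is the integral of
  \<open>second_diff (r + s) f x\<close> over \<open>(r, s) \<in> [0, a]\<^sup>2\<close>, where \<open>0 \<le> r + s \<le> \<delta>\<close>.\<close>
definition "inner_integral x r = a * f_ext x - 2 * (F1 (x + r + a) - F1 (x + r))
  + (F1 (x + 2 * r + 2 * a) - F1 (x + 2 * r)) / 2"
definition "double_integral x r = a * f_ext x * r - 2 * (F2 (x + r + a) - F2 (x + r))
  + (F2 (x + 2 * r + 2 * a) - F2 (x + 2 * r)) / 4"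

lemma has_integral_second_diff:
  assumes x: "0 \<le> x" and r: "0 \<le> r"
  shows "((\<lambda>s. second_diff (r + s) f_ext x) has_integral inner_integral x r) {0..a}"
proof -
  have "((\<lambda>s. 1 * f_ext (x + r + 1 * s)) has_integral (F1 (x + r + 1 * a) - F1 (x + r))) {0..a}"
    by (rule fundamental_theorem_of_calculus_affine) (use a_pos x r in \<open>auto intro!: F1_has_derivative\<close>)
  then have "((\<lambda>s. f_ext (x + r + s)) has_integral (F1 (x + r + a) - F1 (x + r))) {0..a}"
    by simp
  moreover have "((\<lambda>s. 2 * f_ext (x + 2 * r + 2 * s))
      has_integral (F1 (x + 2 * r + 2 * a) - F1 (x + 2 * r))) {0..a}"
    by (rule fundamental_theorem_of_calculus_affine) (use a_pos x r in \<open>auto intro!: F1_has_derivative\<close>)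
  moreover have "((\<lambda>s. f_ext x) has_integral a * f_ext x) {0..a}"
    using has_integral_const_real[of "f_ext x" 0 a] a_pos by simp
  ultimately have "((\<lambda>s. f_ext x - 2 * f_ext (x + r + s) + 2 * f_ext (x + 2 * r + 2 * s) / 2)
      has_integral inner_integral x r) {0..a}"
    unfolding inner_integral_def
    by (intro has_integral_add has_integral_diff has_integral_mult_right has_integral_divide)
  moreover have "f_ext x - 2 * f_ext (x + r + s) + 2 * f_ext (x + 2 * r + 2 * s) / 2
      = second_diff (r + s) f_ext x" for s
    by (simp add: second_diff_def algebra_simps)
  ultimately show ?thesis by simp
qed

lemma inner_integral_le:
  assumes x: "0 \<le> x" and r: "r \<in> {0..a}"
  shows "\<bar>inner_integral x r\<bar> \<le> W * a"
proof -
  have "norm (second_diff (r + s) f_ext x) \<le> W" if s: "s \<in> cbox 0 a" for s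
  proof (cases "r + s = 0")
    case True
    then show ?thesis using W_nonneg by (simp add: second_diff_def)
  next
    case False
    then have "\<bar>second_diff (r + s) f x\<bar> \<le> W"
      using r s x by (intro second_diff_le) (auto simp: a_def)
    then show ?thesis using r s x by (simp add: second_diff_def f_ext_eq)
  qed
  then have "norm (inner_integral x r) \<le> W * measure lborel (cbox 0 a)"
    using has_integral_second_diff[OF x] r W_nonneg by (intro has_integral_bound) auto
  then show ?thesis using a_pos by simp
qed

lemma double_integral_has_derivative:
  assumes x: "0 \<le> x" and r: "0 \<le> r"
  shows "DERIV (double_integral x) r :> inner_integral x r"
proof -
  have "DERIV (\<lambda>r. F2 (x + p + m * r)) r :> F1 (x + p + m * r) * m" if "0 \<le> p" "0 \<le> m" for p m
  proof (rule DERIV_chain2[where f=F2])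
    show "DERIV F2 (x + p + m * r) :> F1 (x + p + m * r)"
    proof (rule F2_has_derivative)
      have "0 \<le> m * r" using that r by simp
      then show "-1 < x + p + m * r" using that x by linarith
    qed
  qed (auto intro!: derivative_eq_intros)
  from this[of a 1] this[of 0 1] this[of "2 * a" 2] this[of 0 2] show ?thesis
    unfolding double_integral_def[abs_def] inner_integral_def using a_pos
    by (auto intro!: derivative_eq_intros simp: field_simps)
qed

lemma steklov_approx:
  assumes x: "0 \<le> x"
  shows "\<bar>f x - steklov F2 x\<bar> \<le> W"
proof -
  have "(double_integral x has_vector_derivative inner_integral x r) (at r within {0..a})"
    if "r \<in> {0..a}" for r
    using double_integral_has_derivative[OF x] that
    by (simp add: has_real_derivative_iff_has_vector_derivative has_vector_derivative_at_within)
  then have "(inner_integral x has_integral (double_integral x a - double_integral x 0)) (cbox 0 a)"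
    using fundamental_theorem_of_calculus[of 0 a "double_integral x" "inner_integral x"] a_pos by simp
  then have "norm (double_integral x a - double_integral x 0) \<le> (W * a) * measure lborel (cbox 0 a)"
    using inner_integral_le[OF x] W_nonneg a_pos by (intro has_integral_bound) auto
  moreover have "double_integral x a - double_integral x 0 = a\<^sup>2 * (f x - steklov F2 x)"
    using a_pos x
    by (simp add: double_integral_def steklov_def second_diff_def f_ext_eq power2_eq_square field_simps)
  ultimately have "a\<^sup>2 * \<bar>f x - steklov F2 x\<bar> \<le> a\<^sup>2 * W"
    using a_pos by (simp add: abs_mult power2_eq_square mult_ac)
  then show ?thesis using a_pos by simp
qed

lemma linear_approx_error:
  assumes "0 \<le> x" "0 \<le> t"
  shows "\<bar>f t - f x - steklov F1 x * (t - x)\<bar> \<le> 2 * W + 9 / 2 * W / \<delta>\<^sup>2 * (t - x)\<^sup>2"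
proof -
  have "f t - f x - steklov F1 x * (t - x) = (f t - steklov F2 t)
      + (steklov F2 t - steklov F2 x - steklov F1 x * (t - x)) - (f x - steklov F2 x)"
    by simp
  with steklov_approx[OF assms(2)] steklov_approx[OF assms(1)] steklov_taylor[OF assms]
  show ?thesis by linarith
qed

end

section \<open>The estimate\<close>

lemma omega2_bounds:
  assumes "bounded (f ` {0..})"
  shows omega2_nonneg: "0 \<le> omega2 f \<delta>"
    and second_diff_le_omega2: "\<And>h x. 0 < h \<Longrightarrow> h \<le> \<delta> \<Longrightarrow> 0 \<le> x \<Longrightarrow> \<bar>second_diff h f x\<bar> \<le> omega2 f \<delta>"
proof -
  obtain B where B: "\<And>t. 0 \<le> t \<Longrightarrow> \<bar>f t\<bar> \<le> B" using assms unfolding bounded_iff by auto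
  define S where "S = insert 0 {\<bar>f (x + 2 * h) - 2 * f (x + h) + f x\<bar> | h x. 0 < h \<and> h \<le> \<delta> \<and> 0 \<le> x}"
  have "bdd_above S"
  proof (rule bdd_aboveI[where M="4 * B"])
    fix y assume "y \<in> S"
    then consider "y = 0" | h x where "y = \<bar>f (x + 2 * h) - 2 * f (x + h) + f x\<bar>" "0 < h" "0 \<le> x"
      unfolding S_def by auto
    then show "y \<le> 4 * B"
    proof cases
      case 1
      then show ?thesis using B[of 0] by simp
    next
      case 2
      then have "\<bar>f (x + 2 * h)\<bar> \<le> B" "\<bar>f (x + h)\<bar> \<le> B" "\<bar>f x\<bar> \<le> B" using B by auto
      with 2 show ?thesis by (simp add: abs_le_iff)
    qed
  qed
  then show "0 \<le> omega2 f \<delta>"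
    unfolding omega2_def S_def[symmetric] by (intro cSup_upper2[of 0]) (auto simp: S_def)
  fix h x :: real assume "0 < h" "h \<le> \<delta>" "0 \<le> x"
  with \<open>bdd_above S\<close> show "\<bar>second_diff h f x\<bar> \<le> omega2 f \<delta>"
    unfolding omega2_def S_def[symmetric] second_diff_def by (intro cSup_upper) (auto simp: S_def)
qed

lemma D_op_at_0: "D_op n c \<beta> f 0 = f 0"
  by (simp add: D_op_def r_n_def omega_beta_def)

locale operator_setting =
  fixes c \<beta> :: real and n :: nat and x :: real
  assumes c_pos: "0 < c" and n_gt: "3 * c < real n" and beta_pos: "0 < \<beta>" and beta_less_1: "\<beta> < 1"
    and x_pos: "0 < x"
begin

sublocale gen_poisson \<beta> using beta_pos beta_less_1 by unfold_locales

definition "u = real n * r_n n c \<beta> x"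
definition "w v = omega_beta \<beta> (Suc v) u"

lemma u_eq: "u = (real n - 2 * c) * (1 - \<beta>) * x"
  using n_gt c_pos by (simp add: u_def r_n_def)

lemma u_nonneg: "0 \<le> u"
  unfolding u_eq using n_gt c_pos beta_less_1 x_pos by simp

lemma w_nonneg: "0 \<le> w v"
  unfolding w_def omega_beta_def using u_nonneg beta_pos by simp

lemma mu2_pos: "0 < mu2 n c \<beta> x"
proof -
  have "2 - 2 * \<beta> + \<beta>\<^sup>2 = 1 + (1 - \<beta>)\<^sup>2" by (simp add: power2_eq_square algebra_simps)
  then have "0 < 2 - 2 * \<beta> + \<beta>\<^sup>2" by (metis add_pos_nonneg zero_le_power2 zero_less_one)
  then show ?thesis
    unfolding mu2_def using c_pos n_gt beta_less_1 x_pos by (intro add_pos_pos) auto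
qed

lemma kernel_mean_const': "kernel_mean n c k (\<lambda>t. r) = r"
  using kernel_mean_const c_pos n_gt by simp

lemma kernel_mean_id': "kernel_mean n c k (\<lambda>t. t) = (real k + 1) / (real n - 2 * c)"
  using kernel_mean_id c_pos n_gt by simp

lemma kernel_integrable_id: "kernel_integrable n c k (\<lambda>t. t)"
  using kernel_integrable_power[of c 1 n k] c_pos n_gt by simp

lemma kernel_integrable_sq: "kernel_integrable n c k (\<lambda>t. t\<^sup>2)"
  using kernel_integrable_power[of c 2 n k] c_pos n_gt by simp

lemma sq_dist_eq: "(t - x)\<^sup>2 = (t\<^sup>2 - (2 * x) * t) + x\<^sup>2"
  by (simp add: power2_eq_square algebra_simps)

lemma kernel_integrable_sq_dist: "kernel_integrable n c k (\<lambda>t. (t - x)\<^sup>2)"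
proof -
  have "kernel_integrable n c k (\<lambda>t. (t\<^sup>2 - (2 * x) * t) + x\<^sup>2)"
    using c_pos n_gt
    by (intro kernel_integrable_add kernel_integrable_diff kernel_integrable_cmult kernel_integrable_id
        kernel_integrable_sq kernel_integrable_const) auto
  then show ?thesis by (simp only: sq_dist_eq)
qed

lemma kernel_mean_sq_dist:
  "kernel_mean n c k (\<lambda>t. (t - x)\<^sup>2)
    = (real k + 1) * (real k + 2) / ((real n - 2 * c) * (real n - 3 * c))
      - 2 * x * ((real k + 1) / (real n - 2 * c)) + x\<^sup>2"
proof -
  have "kernel_integrable n c k (\<lambda>t. x\<^sup>2)"
    using c_pos n_gt by (intro kernel_integrable_const) auto
  moreover have "kernel_integrable n c k (\<lambda>t. t\<^sup>2 - (2 * x) * t)"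
    by (intro kernel_integrable_diff kernel_integrable_cmult kernel_integrable_id kernel_integrable_sq)
  ultimately show ?thesis
    using c_pos n_gt
    by (simp only: sq_dist_eq)
       (simp add: kernel_mean_add kernel_mean_diff[OF kernel_integrable_sq kernel_integrable_cmult[OF kernel_integrable_id]]
        kernel_mean_cmult kernel_mean_const' kernel_mean_id' kernel_mean_sq)
qed

lemma weights_sums: "w sums (1 - exp (- u))"
  unfolding w_def[abs_def] by (rule omega_beta_sums[OF u_nonneg])

lemma weights_sums_mean_id: "(\<lambda>v. w v * kernel_mean n c v (\<lambda>t. t)) sums x"
proof -
  have "(\<lambda>v. real (Suc v) * w v / (real n - 2 * c)) sums (u / (1 - \<beta>) / (real n - 2 * c))"
    unfolding w_def by (intro sums_divide omega_beta_sums_first[OF u_nonneg])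
  moreover have "u / (1 - \<beta>) / (real n - 2 * c) = x"
    using n_gt c_pos beta_less_1 by (simp add: u_eq)
  moreover have "real (Suc v) * w v / (real n - 2 * c) = w v * kernel_mean n c v (\<lambda>t. t)" for v
    by (simp add: kernel_mean_id' add.commute)
  ultimately show ?thesis by simp
qed

lemma weights_sums_mean_sq_dist:
  "(\<lambda>v. w v * kernel_mean n c v (\<lambda>t. (t - x)\<^sup>2)) sums (mu2 n c \<beta> x - exp (- u) * x\<^sup>2)"
proof -
  define N2 N3 where "N2 = real n - 2 * c" and "N3 = real n - 3 * c"
  have N: "0 < N2" "0 < N3" using n_gt c_pos by (auto simp: N2_def N3_def)
  define M2 where "M2 = u / (1 - \<beta>) + u * ((u + \<beta>) / (1 - \<beta>)\<^sup>2 + \<beta> / (1 - \<beta>) ^ 3)"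
  have "(\<lambda>v. (real (Suc v))\<^sup>2 * w v / (N2 * N3) + real (Suc v) * w v / (N2 * N3)
      - (2 * x / N2) * (real (Suc v) * w v) + x\<^sup>2 * w v)
    sums (M2 / (N2 * N3) + u / (1 - \<beta>) / (N2 * N3) - (2 * x / N2) * (u / (1 - \<beta>)) + x\<^sup>2 * (1 - exp (- u)))"
    unfolding w_def M2_def
    by (intro sums_add sums_diff sums_divide sums_mult omega_beta_sums_first omega_beta_sums_second
        omega_beta_sums u_nonneg)
  moreover have "(real (Suc v))\<^sup>2 * w v / (N2 * N3) + real (Suc v) * w v / (N2 * N3)
      - (2 * x / N2) * (real (Suc v) * w v) + x\<^sup>2 * w v = w v * kernel_mean n c v (\<lambda>t. (t - x)\<^sup>2)" for v
    unfolding kernel_mean_sq_dist N2_def[symmetric] N3_def[symmetric] using N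
    by (simp add: field_simps power2_eq_square)
  moreover have "M2 / (N2 * N3) + u / (1 - \<beta>) / (N2 * N3) - (2 * x / N2) * (u / (1 - \<beta>))
      + x\<^sup>2 * (1 - exp (- u)) = mu2 n c \<beta> x - exp (- u) * x\<^sup>2"
  proof -
    have alg: "(N * d * X / d + N * d * X * ((N * d * X + (1 - d)) / d\<^sup>2 + (1 - d) / d ^ 3)) / (N * N')
        + N * d * X / d / (N * N') - (2 * X / N) * (N * d * X / d) + X\<^sup>2 * (1 - E)
      = (N - N') / N' * X\<^sup>2 + (2 - 2 * (1 - d) + (1 - d)\<^sup>2) / (N' * d\<^sup>2) * X - E * X\<^sup>2"
      if "N \<noteq> 0" "N' \<noteq> 0" "d \<noteq> 0" for N N' d X E :: real
      using that by (simp add: field_simps power2_eq_square power3_eq_cube)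
    have "N2 - N3 = c" by (simp add: N2_def N3_def)
    then show ?thesis
      using alg[of N2 N3 "1 - \<beta>" x "exp (- u)"] N beta_less_1
      unfolding M2_def mu2_def N3_def[symmetric] u_eq N2_def[symmetric] by simp
  qed
  ultimately show ?thesis by simp
qed

lemma summable_weighted_kernel_mean:
  assumes "\<And>k. \<bar>kernel_mean n c k \<phi>\<bar> \<le> B"
  shows "summable (\<lambda>v. w v * kernel_mean n c v \<phi>)"
proof (rule summable_comparison_test'[where g="\<lambda>v. B * w v"])
  show "summable (\<lambda>v. B * w v)" using weights_sums by (intro summable_mult) (auto simp: sums_iff)
  show "norm (w v * kernel_mean n c v \<phi>) \<le> B * w v" for v
    using mult_right_mono[OF assms[of v] w_nonneg[of v]] w_nonneg[of v] by (simp add: abs_mult mult.commute)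
qed

lemma D_op_eq_weighted_sum:
  assumes "summable (\<lambda>v. w v * kernel_mean n c v f)"
  shows "D_op n c \<beta> f x = (\<Sum>v. w v * kernel_mean n c v f) + exp (- u) * f 0"
proof -
  define L where "L v = (LINT t:{0..}|lborel. p_basis n v c t * f t)" for v
  have "(\<Sum>v. w v * kernel_mean n c v f) = (\<Sum>v. (real n - c) / c * (w v * L v))"
    by (simp add: kernel_mean_def L_def mult_ac)
  also have "\<dots> = (real n - c) / c * (\<Sum>v. w v * L v)"
  proof (rule suminf_mult)
    have "(\<lambda>v. w v * L v) = (\<lambda>v. c / (real n - c) * (w v * kernel_mean n c v f))"
      using n_gt c_pos by (intro ext) (simp add: kernel_mean_def L_def field_simps)
    then show "summable (\<lambda>v. w v * L v)" using assms by (simp add: summable_mult)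
  qed
  finally show ?thesis unfolding D_op_def w_def[symmetric] L_def[symmetric] u_def[symmetric] by simp
qed

end

locale operator_estimate = operator_setting +
  fixes f :: "real \<Rightarrow> real"
  assumes f_continuous: "continuous_on {0..} f" and f_bounded: "bounded (f ` {0..})"
begin

definition "\<delta> = sqrt (mu2 n c \<beta> x)"
definition "W = omega2 f \<delta>"

sublocale bounded_second_diff f \<delta> W
  using f_continuous mu2_pos second_diff_le_omega2[OF f_bounded]
  by unfold_locales (auto simp: W_def \<delta>_def)

definition "L = steklov F1 x"
definition "K = 9 / 2 * W / \<delta>\<^sup>2"
definition "err t = f t - (f x - L * x) - L * t"

lemma K_mu2: "K * mu2 n c \<beta> x = 9 / 2 * W"
  using mu2_pos by (simp add: K_def \<delta>_def)

lemma err_le: "0 \<le> t \<Longrightarrow> \<bar>err t\<bar> \<le> 2 * W + K * (t - x)\<^sup>2"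
  using linear_approx_error[of x t] x_pos by (simp add: err_def K_def L_def algebra_simps)

lemma n_gt_c: "c < real n"
  using n_gt c_pos by simp

lemma kernel_integrable_f: "kernel_integrable n c k f"
proof -
  obtain B where "\<And>t. 0 \<le> t \<Longrightarrow> \<bar>f t\<bar> \<le> B" using f_bounded unfolding bounded_iff by auto
  with c_pos n_gt_c f_continuous show ?thesis by (rule kernel_integrable_bounded)
qed

lemma summable_weighted_mean_f: "summable (\<lambda>v. w v * kernel_mean n c v f)"
proof -
  obtain B where B: "\<And>t. 0 \<le> t \<Longrightarrow> \<bar>f t\<bar> \<le> B" using f_bounded unfolding bounded_iff by auto
  have "\<bar>kernel_mean n c k f\<bar> \<le> kernel_mean n c k (\<lambda>t. B)" for k
    by (intro kernel_mean_abs_le[OF c_pos n_gt_c kernel_integrable_f] kernel_integrable_const[OF c_pos n_gt_c] B)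
  then show ?thesis by (intro summable_weighted_kernel_mean) (simp add: kernel_mean_const')
qed

lemma kernel_integrable_err: "kernel_integrable n c k err"
  unfolding err_def[abs_def] using c_pos n_gt_c
  by (intro kernel_integrable_diff kernel_integrable_cmult kernel_integrable_const kernel_integrable_f
      kernel_integrable_id)

lemma kernel_mean_err:
  "kernel_mean n c k err = kernel_mean n c k f - f x - L * (kernel_mean n c k (\<lambda>t. t) - x)"
proof -
  have const: "kernel_integrable n c k (\<lambda>t. f x - L * x)"
    using c_pos n_gt_c by (rule kernel_integrable_const)
  have "kernel_mean n c k err = kernel_mean n c k (\<lambda>t. f t - (f x - L * x)) - kernel_mean n c k (\<lambda>t. L * t)"
    unfolding err_def[abs_def]
    by (intro kernel_mean_diff kernel_integrable_diff kernel_integrable_cmult kernel_integrable_f const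
        kernel_integrable_id)
  also have "\<dots> = kernel_mean n c k f - (f x - L * x) - L * kernel_mean n c k (\<lambda>t. t)"
    by (simp add: kernel_mean_diff[OF kernel_integrable_f const] kernel_mean_cmult kernel_mean_const')
  finally show ?thesis by (simp add: algebra_simps)
qed

lemma kernel_mean_err_le: "\<bar>kernel_mean n c k err\<bar> \<le> 2 * W + K * kernel_mean n c k (\<lambda>t. (t - x)\<^sup>2)"
proof -
  have bound_integrable: "kernel_integrable n c k (\<lambda>t. 2 * W + K * (t - x)\<^sup>2)"
    using c_pos n_gt_c
    by (intro kernel_integrable_add kernel_integrable_const kernel_integrable_cmult kernel_integrable_sq_dist)
  have "\<bar>kernel_mean n c k err\<bar> \<le> kernel_mean n c k (\<lambda>t. 2 * W + K * (t - x)\<^sup>2)"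
    by (rule kernel_mean_abs_le[OF c_pos n_gt_c kernel_integrable_err bound_integrable err_le])
  also have "\<dots> = 2 * W + K * kernel_mean n c k (\<lambda>t. (t - x)\<^sup>2)"
    using c_pos n_gt_c
    by (simp add: kernel_mean_add kernel_integrable_const kernel_integrable_cmult kernel_integrable_sq_dist
        kernel_mean_cmult kernel_mean_const')
  finally show ?thesis .
qed

lemma weighted_mean_err_sums:
  "(\<lambda>v. w v * kernel_mean n c v err) sums (D_op n c \<beta> f x - f x - exp (- u) * err 0)"
proof -
  have "(\<lambda>v. w v * kernel_mean n c v f - f x * w v - L * (w v * kernel_mean n c v (\<lambda>t. t) - x * w v))
      sums ((\<Sum>v. w v * kernel_mean n c v f) - f x * (1 - exp (- u)) - L * (x - x * (1 - exp (- u))))"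
    by (intro sums_diff sums_mult summable_sums summable_weighted_mean_f weights_sums weights_sums_mean_id)
  then show ?thesis
    unfolding D_op_eq_weighted_sum[OF summable_weighted_mean_f]
    by (simp add: kernel_mean_err err_def algebra_simps)
qed

lemma weighted_mean_err_le:
  "\<bar>D_op n c \<beta> f x - f x - exp (- u) * err 0\<bar>
    \<le> 2 * W * (1 - exp (- u)) + K * (mu2 n c \<beta> x - exp (- u) * x\<^sup>2)"
proof -
  have "(\<lambda>v. 2 * W * w v + K * (w v * kernel_mean n c v (\<lambda>t. (t - x)\<^sup>2)))
      sums (2 * W * (1 - exp (- u)) + K * (mu2 n c \<beta> x - exp (- u) * x\<^sup>2))"
    by (intro sums_add sums_mult weights_sums weights_sums_mean_sq_dist)
  then have bound_sums: "(\<lambda>v. w v * (2 * W + K * kernel_mean n c v (\<lambda>t. (t - x)\<^sup>2)))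
      sums (2 * W * (1 - exp (- u)) + K * (mu2 n c \<beta> x - exp (- u) * x\<^sup>2))"
    by (simp add: algebra_simps)
  have "\<bar>w v * kernel_mean n c v err\<bar> \<le> w v * (2 * W + K * kernel_mean n c v (\<lambda>t. (t - x)\<^sup>2))" for v
    using kernel_mean_err_le[of v] w_nonneg[of v] by (simp add: abs_mult mult_left_mono)
  then show ?thesis
    using sums_le[OF _ weighted_mean_err_sums bound_sums] sums_le[OF _ sums_minus[OF weighted_mean_err_sums] bound_sums]
    by (auto simp: abs_le_iff)
qed

text \<open>The operator reproduces constants and linear functions, so the error of \<open>D_op\<close> at \<open>x\<close> is its
  value on \<open>err\<close>, which is dominated by \<open>2 W + K (t - x)\<^sup>2\<close>; the point mass at \<open>0\<close> is
  treated separately.\<close>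
lemma D_op_error_le: "\<bar>D_op n c \<beta> f x - f x\<bar> \<le> 7 * W"
proof -
  have "\<bar>exp (- u) * err 0\<bar> \<le> exp (- u) * (2 * W + K * x\<^sup>2)"
    using err_le[of 0] by (simp add: abs_mult mult_left_mono)
  then have "\<bar>D_op n c \<beta> f x - f x\<bar>
      \<le> 2 * W * (1 - exp (- u)) + K * (mu2 n c \<beta> x - exp (- u) * x\<^sup>2) + exp (- u) * (2 * W + K * x\<^sup>2)"
    using weighted_mean_err_le by linarith
  also have "\<dots> = 2 * W + K * mu2 n c \<beta> x" by (simp add: algebra_simps)
  also have "\<dots> = 2 * W + 9 / 2 * W" by (simp only: K_mu2)
  also have "\<dots> \<le> 7 * W" using W_nonneg by simp
  finally show ?thesis .
qed

end

theorem theorem7: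
  fixes c :: real
  assumes "c > 0"
  shows "\<exists>C1 > 0. \<forall>(f :: real \<Rightarrow> real) \<beta> (n :: nat) x.
           continuous_on {0..} f \<and> bounded (f ` {0..}) \<and> 0 < \<beta> \<and> \<beta> < 1
           \<and> real n > 3 * c \<and> 0 \<le> x \<longrightarrow>
           \<bar>D_op n c \<beta> f x - f x\<bar> \<le> C1 * omega2 f (sqrt (mu2 n c \<beta> x))"
proof (intro exI[of _ 7] conjI allI impI)
  fix f :: "real \<Rightarrow> real" and \<beta> x :: real and n :: nat
  assume h: "continuous_on {0..} f \<and> bounded (f ` {0..}) \<and> 0 < \<beta> \<and> \<beta> < 1
    \<and> real n > 3 * c \<and> 0 \<le> x"
  show "\<bar>D_op n c \<beta> f x - f x\<bar> \<le> 7 * omega2 f (sqrt (mu2 n c \<beta> x))"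
  proof (cases "x = 0")
    case True
    then show ?thesis using D_op_at_0 omega2_nonneg h by simp
  next
    case False
    then interpret operator_estimate c \<beta> n x f using h assms by unfold_locales auto
    show ?thesis using D_op_error_le by (simp add: W_def \<delta>_def)
  qed
qed simp

end
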